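(* If $\langle P\mid\Gamma\rangle$ is correct and $\langle P\mid\Gamma\rangle\rightarrow\langle P'\mid\Gamma'\rangle$, then $\langle P'\mid\Gamma'\rangle$ is also correct.
   Context: Write ⅋ for par and $\odot$ for the cut connective. A pre-proof graph with cuts $\langle P\mid\Gamma\rangle$ is an MLL linking tree $P$ with a sequent $\Gamma$ possibly containing cuts $A\odot A^\perp$ as roots, sharing the same leaves; it is correct if every switching (deleting one child edge per ⅋-node; $\odot$ behaves like $\otimes$) is connected and acyclic. The cut reduction relation $\rightarrow$ on pre-proof graphs is: $\langle P\mid(A⅋B)\odot(B^\perp\otimes A^\perp),\Gamma\rangle\to\langle P\mid A\odot A^\perp,B\odot B^\perp,\Gamma\rangle$; $\langle P[(a_h^\perp\otimes a_i)⅋(a_j^\perp\otimes a_k)]\mid a_i\odot a_j^\perp,\Gamma\rangle\to\langle P[a_h^\perp\otimes a_k]\mid\Gamma\rangle$; $\langle P[(Q\otimes\bot_i)⅋\mathsf1_j]\mid\bot_i\odot\mathsf1_j,\Gamma\rangle\to\langle P[Q]\mid\Gamma\rangle$. *)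

theory Defs
  imports "HOL-Library.Multiset"
begin

datatype 'a lit = Pos 'a | Neg 'a | One | Bot

fun neg_lit :: "'a lit \<Rightarrow> 'a lit" where
  "neg_lit (Pos a) = Neg a"
| "neg_lit (Neg a) = Pos a"
| "neg_lit One = Bot"
| "neg_lit Bot = One"

datatype conn = Tens | Par | CutC

(* trees whose leaves are labelled by (index, literal); the index identifies the leaf *)
datatype 'a ftree = Leaf nat "'a lit" | Node conn "'a ftree" "'a ftree"

fun cutfree :: "'a ftree \<Rightarrow> bool" where
  "cutfree (Leaf i l) = True"
| "cutfree (Node c A B) = (c \<noteq> CutC \<and> cutfree A \<and> cutfree B)"

fun leaves :: "'a ftree \<Rightarrow> (nat \<times> 'a lit) list" where
  "leaves (Leaf i l) = [(i, l)]"
| "leaves (Node c A B) = leaves A @ leaves B"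

(* is_dual A B: B is (a copy, with its own leaf indices, of) A^\<bottom>;
   (A \<otimes> B)^\<bottom> = B^\<bottom> \<parr> A^\<bottom> and (A \<parr> B)^\<bottom> = B^\<bottom> \<otimes> A^\<bottom> *)
fun is_dual :: "'a ftree \<Rightarrow> 'a ftree \<Rightarrow> bool" where
  "is_dual (Leaf i l) (Leaf j l') = (l' = neg_lit l)"
| "is_dual (Node Tens A B) (Node Par B' A') = (is_dual A A' \<and> is_dual B B')"
| "is_dual (Node Par A B) (Node Tens B' A') = (is_dual A A' \<and> is_dual B B')"
| "is_dual _ _ = False"

(* a pre-proof graph \<langle>P | \<Gamma>\<rangle>: P is a cut-free linking tree, \<Gamma> a sequent (list, order irrelevant)
   whose roots are formulas or cuts A \<odot> A^\<bottom>; P and \<Gamma> share exactly the same leaves *)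
definition pre_proof_graph :: "'a ftree \<Rightarrow> 'a ftree list \<Rightarrow> bool" where
  "pre_proof_graph P \<Gamma> \<longleftrightarrow>
     cutfree P \<and>
     (\<forall>F \<in> set \<Gamma>. cutfree F \<or> (\<exists>A B. F = Node CutC A B \<and> cutfree A \<and> cutfree B \<and> is_dual A B)) \<and>
     distinct (map fst (leaves P)) \<and>
     mset (leaves P) = mset (concat (map leaves \<Gamma>))"

(* vertices: internal nodes of P (by position), internal nodes of the k-th root of \<Gamma>
   (by position), and the shared leaves (by index) *)
datatype vtx = VP "bool list" | VG nat "bool list" | VL nat

fun troot :: "(bool list \<Rightarrow> vtx) \<Rightarrow> bool list \<Rightarrow> 'a ftree \<Rightarrow> vtx" where
  "troot f p (Leaf i l) = VL i"
| "troot f p (Node c A B) = f p"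

fun tverts :: "(bool list \<Rightarrow> vtx) \<Rightarrow> bool list \<Rightarrow> 'a ftree \<Rightarrow> vtx set" where
  "tverts f p (Leaf i l) = {VL i}"
| "tverts f p (Node c A B) = {f p} \<union> tverts f (p @ [False]) A \<union> tverts f (p @ [True]) B"

fun tedges :: "(vtx \<Rightarrow> bool) \<Rightarrow> (bool list \<Rightarrow> vtx) \<Rightarrow> bool list \<Rightarrow> 'a ftree \<Rightarrow> vtx set set" where
  "tedges s f p (Leaf i l) = {}"
| "tedges s f p (Node c A B) =
     (let eA = {f p, troot f (p @ [False]) A}; eB = {f p, troot f (p @ [True]) B}
      in (if c = Par then (if s (f p) then {eB} else {eA}) else {eA, eB}))
     \<union> tedges s f (p @ [False]) A \<union> tedges s f (p @ [True]) B"

definition graph_verts :: "'a ftree \<Rightarrow> 'a ftree list \<Rightarrow> vtx set" where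
  "graph_verts P \<Gamma> = tverts VP [] P \<union> (\<Union>k<length \<Gamma>. tverts (VG k) [] (\<Gamma> ! k))"

definition switch_edges :: "(vtx \<Rightarrow> bool) \<Rightarrow> 'a ftree \<Rightarrow> 'a ftree list \<Rightarrow> vtx set set" where
  "switch_edges s P \<Gamma> = tedges s VP [] P \<union> (\<Union>k<length \<Gamma>. tedges s (VG k) [] (\<Gamma> ! k))"

definition ug_connected :: "vtx set \<Rightarrow> vtx set set \<Rightarrow> bool" where
  "ug_connected V E \<longleftrightarrow> (\<forall>u\<in>V. \<forall>v\<in>V. (u, v) \<in> {(x, y). {x, y} \<in> E}\<^sup>*)"

definition ug_cycle :: "vtx set set \<Rightarrow> vtx list \<Rightarrow> bool" where
  "ug_cycle E vs \<longleftrightarrow> length vs \<ge> 3 \<and> distinct vs \<and>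
     (\<forall>i < length vs. {vs ! i, vs ! ((i + 1) mod length vs)} \<in> E)"

definition ug_acyclic :: "vtx set set \<Rightarrow> bool" where
  "ug_acyclic E \<longleftrightarrow> \<not> (\<exists>vs. ug_cycle E vs)"

definition correct :: "'a ftree \<Rightarrow> 'a ftree list \<Rightarrow> bool" where
  "correct P \<Gamma> \<longleftrightarrow> pre_proof_graph P \<Gamma> \<and>
     (\<forall>s. ug_connected (graph_verts P \<Gamma>) (switch_edges s P \<Gamma>) \<and> ug_acyclic (switch_edges s P \<Gamma>))"

datatype 'a ctx = Hole | CL conn "'a ctx" "'a ftree" | CR conn "'a ftree" "'a ctx"

fun plug :: "'a ctx \<Rightarrow> 'a ftree \<Rightarrow> 'a ftree" where
  "plug Hole T = T"
| "plug (CL c C B) T = Node c (plug C T) B"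
| "plug (CR c A C) T = Node c A (plug C T)"

inductive cut_red :: "'a ftree \<Rightarrow> 'a ftree list \<Rightarrow> 'a ftree \<Rightarrow> 'a ftree list \<Rightarrow> bool" where
  mult: "mset \<Gamma> = add_mset (Node CutC (Node Par A B) (Node Tens B' A')) (mset \<Delta>) \<Longrightarrow>
         mset \<Gamma>' = add_mset (Node CutC A A') (add_mset (Node CutC B B') (mset \<Delta>)) \<Longrightarrow>
         cut_red P \<Gamma> P \<Gamma>'"
| atom: "P = plug C (Node Par (Node Tens (Leaf h (Neg a)) (Leaf i (Pos a)))
                              (Node Tens (Leaf j (Neg a)) (Leaf k (Pos a)))) \<Longrightarrow>
         mset \<Gamma> = add_mset (Node CutC (Leaf i (Pos a)) (Leaf j (Neg a))) (mset \<Delta>) \<Longrightarrow>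
         P' = plug C (Node Tens (Leaf h (Neg a)) (Leaf k (Pos a))) \<Longrightarrow>
         cut_red P \<Gamma> P' \<Delta>"
| unit: "P = plug C (Node Par (Node Tens Q (Leaf i Bot)) (Leaf j One)) \<Longrightarrow>
         mset \<Gamma> = add_mset (Node CutC (Leaf i Bot) (Leaf j One)) (mset \<Delta>) \<Longrightarrow>
         cut_red P \<Gamma> (plug C Q) \<Delta>"

end

(* Correctness says that every switching graph is a tree, and acyclicity amounts to every edge
   being a bridge. A tree stays a tree when vertex sets that are connected by edges inside them are
   each contracted to a point. For the atomic and the unit step, every switching graph of the reduct
   is such a contraction of a switching graph of the redex, collapsing the cut together with the
   nodes and leaves around it. For the multiplicative step, the two switchings of the par in the cut
   yield, by two edge exchanges, a tree on the vertices of the redex that contracts onto the given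
   switching graph of the reduct by merging the old cut with the old tensor. Reordering the sequent
   is an injective relabelling of vertices. *)

theory Submission
  imports Defs "HOL-Library.Transitive_Closure_Table" "HOL-Library.Sublist" "HOL-Combinatorics.Permutations"
begin

section \<open>Undirected graphs as sets of edges\<close>

definition edge_rel :: "'v set set \<Rightarrow> ('v \<times> 'v) set" where
  "edge_rel E = {(x, y). {x, y} \<in> E}"

abbreviation linked :: "'v set set \<Rightarrow> 'v \<Rightarrow> 'v \<Rightarrow> bool" where
  "linked E x y \<equiv> (x, y) \<in> (edge_rel E)\<^sup>*"

lemma edge_rel_iff [simp]: "(x, y) \<in> edge_rel E \<longleftrightarrow> {x, y} \<in> E"
  by (simp add: edge_rel_def)

lemma linked_edge: "{x, y} \<in> E \<Longrightarrow> linked E x y"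
  by (simp add: r_into_rtrancl)

lemma linked_sym: "linked E x y \<Longrightarrow> linked E y x"
proof -
  have "sym (edge_rel E)"
    by (auto simp: sym_def insert_commute)
  then show "linked E x y \<Longrightarrow> linked E y x"
    by (blast dest: symD sym_rtrancl)
qed

lemma linked_mono: "linked E x y \<Longrightarrow> E \<subseteq> F \<Longrightarrow> linked F x y"
  by (metis edge_rel_iff rtrancl_mono subrelI subset_iff)

lemma linked_hom:
  assumes "\<And>x y. {x, y} \<in> E \<Longrightarrow> linked F (\<phi> x) (\<phi> y)" and "linked E u v"
  shows "linked F (\<phi> u) (\<phi> v)"
  using assms(2) by induction (auto intro: rtrancl_trans assms(1))

lemma linked_replace_edge:
  assumes "linked E x y" "E - {{u, v}} \<subseteq> F" "linked F u v"
  shows "linked F x y"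
proof -
  have "linked F a b" if "{a, b} \<in> E" for a b
  proof (cases "{a, b} = {u, v}")
    case True
    then show ?thesis
      using assms(3) linked_sym by (auto simp: doubleton_eq_iff)
  qed (use that assms(2) in \<open>auto intro: linked_edge\<close>)
  then show ?thesis
    using linked_hom[where \<phi> = id, OF _ assms(1)] by simp
qed

lemma linked_exit:
  assumes "linked (H \<union> G) x y" "y \<in> S" "x \<notin> S" "\<forall>e\<in>H. e \<inter> S = {}"
  shows "\<exists>e\<in>G. \<exists>q\<in>e. q \<notin> S \<and> linked H x q"
  using assms(1,3)
proof (induction rule: converse_rtrancl_induct)
  case base
  with assms(2) show ?case by simp
next
  case (step x m)
  show ?case
  proof (cases "{x, m} \<in> G")
    case True
    with step.prems show ?thesis by blast
  next
    case False
    with step.hyps(1) have "{x, m} \<in> H" by simp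
    with assms(4) have "m \<notin> S" by auto
    with step.IH obtain e q where "e \<in> G" "q \<in> e" "q \<notin> S" "linked H m q" by blast
    with \<open>{x, m} \<in> H\<close> show ?thesis by (meson linked_edge rtrancl_trans)
  qed
qed

definition all_bridges :: "'v set set \<Rightarrow> bool" where
  "all_bridges E \<longleftrightarrow> (\<forall>x y. {x, y} \<in> E \<longrightarrow> x \<noteq> y \<longrightarrow> \<not> linked (E - {{x, y}}) x y)"

lemma ug_cycle_if_bypass:
  assumes e: "{x, y} \<in> E" and "x \<noteq> y" and bypass: "linked (E - {{x, y}}) y x"
  shows "\<exists>vs. ug_cycle E vs"
proof -
  let ?R = "\<lambda>a b. (a, b) \<in> edge_rel (E - {{x, y}})"
  have "?R\<^sup>*\<^sup>* y x"
    using bypass by (simp add: rtrancl_def)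
  then obtain xs where "rtrancl_path ?R y xs x"
    by (auto simp: rtranclp_eq_rtrancl_path)
  then obtain ys where path: "rtrancl_path ?R y ys x" and distinct: "distinct (y # ys)"
    by (rule rtrancl_path_distinct)
  have "ys \<noteq> []"
    using path \<open>x \<noteq> y\<close> by (auto elim: rtrancl_path.cases)
  then have last: "last ys = x"
    by (rule rtrancl_path_last[OF path])
  have "ys \<noteq> [x]"
    using rtrancl_path_nth[OF path, of 0] by (auto simp: insert_commute)
  with \<open>ys \<noteq> []\<close> last have "length (y # ys) \<ge> 3"
    by (cases ys rule: rev_cases) (auto simp: Suc_le_eq)
  moreover have "{(y # ys) ! i, (y # ys) ! ((i + 1) mod length (y # ys))} \<in> E"
    if "i < length (y # ys)" for i
  proof (cases "i < length ys")
    case True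
    then show ?thesis using rtrancl_path_nth[OF path True] by simp
  next
    case False
    with that have "i = length ys" by simp
    with e last \<open>ys \<noteq> []\<close> show ?thesis by (simp add: last_conv_nth insert_commute)
  qed
  ultimately show ?thesis
    using distinct unfolding ug_cycle_def by blast
qed

lemma linked_along_cycle:
  assumes "ug_cycle E vs" and "k < length vs"
  shows "linked (E - {{vs ! 0, vs ! (length vs - 1)}}) (vs ! 0) (vs ! k)"
  using assms(2)
proof (induction k)
  case (Suc k)
  let ?n = "length vs" and ?x = "vs ! 0" and ?y = "vs ! (length vs - 1)"
  have n: "?n \<ge> 3" "distinct vs" and edges: "\<forall>i<?n. {vs ! i, vs ! ((i + 1) mod ?n)} \<in> E"
    using assms(1) by (auto simp: ug_cycle_def)
  then have "{vs ! k, vs ! Suc k} \<in> E"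
    using Suc.prems by (metis Suc_eq_plus1 Suc_lessD mod_less)
  have index: "i = j" if "vs ! i = vs ! j" "i < ?n" "j < ?n" for i j
    using that n(2) nth_eq_iff_index_eq by blast
  moreover have "{vs ! k, vs ! Suc k} \<noteq> {?x, ?y}"
  proof
    assume eq: "{vs ! k, vs ! Suc k} = {?x, ?y}"
    have bounds: "k < ?n" "0 < ?n" "?n - 1 < ?n"
      using Suc.prems by auto
    have "vs ! Suc k \<noteq> ?x"
      using index[of "Suc k" 0] Suc.prems bounds by auto
    with eq have "vs ! k = ?x" "vs ! Suc k = ?y"
      by (auto simp: doubleton_eq_iff)
    then have "k = 0" "Suc k = ?n - 1"
      using index[of k 0] index[of "Suc k" "?n - 1"] Suc.prems bounds by auto
    with n(1) show False
      by simp
  qed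
  ultimately have "linked (E - {{?x, ?y}}) (vs ! k) (vs ! Suc k)"
    using \<open>{vs ! k, vs ! Suc k} \<in> E\<close> by (intro linked_edge) simp
  with Suc show ?case
    by (meson Suc_lessD rtrancl_trans)
qed simp

lemma bypass_if_ug_cycle:
  assumes "ug_cycle E vs"
  shows "\<exists>x y. {x, y} \<in> E \<and> x \<noteq> y \<and> linked (E - {{x, y}}) x y"
proof -
  let ?n = "length vs"
  have n: "?n \<ge> 3" "distinct vs" and edges: "\<forall>i<?n. {vs ! i, vs ! ((i + 1) mod ?n)} \<in> E"
    using assms by (auto simp: ug_cycle_def)
  have bounds: "?n - 1 < ?n" "0 < ?n" "?n - 1 \<noteq> 0" "?n - 1 + 1 = ?n"
    using n(1) by arith+
  then have "vs ! 0 \<noteq> vs ! (?n - 1)"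
    using n(2) nth_eq_iff_index_eq by metis
  moreover have "{vs ! 0, vs ! (?n - 1)} \<in> E"
    using edges bounds by (metis insert_commute mod_self)
  ultimately show ?thesis
    using linked_along_cycle[OF assms \<open>?n - 1 < ?n\<close>] by blast
qed

lemma ug_acyclic_iff_all_bridges: "ug_acyclic E \<longleftrightarrow> all_bridges E"
proof
  show "all_bridges E" if "ug_acyclic E"
    unfolding all_bridges_def
  proof (intro allI impI notI)
    fix x y
    assume "{x, y} \<in> E" "x \<noteq> y" "linked (E - {{x, y}}) x y"
    with ug_cycle_if_bypass linked_sym have "\<exists>vs. ug_cycle E vs"
      by metis
    with that show False
      unfolding ug_acyclic_def by simp
  qed
  show "ug_acyclic E" if "all_bridges E"
    using that bypass_if_ug_cycle unfolding ug_acyclic_def all_bridges_def by meson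
qed

definition ug_tree :: "'v set \<Rightarrow> 'v set set \<Rightarrow> bool" where
  "ug_tree V E \<longleftrightarrow> (\<forall>x\<in>V. \<forall>y\<in>V. linked E x y) \<and> all_bridges E"

definition edges_within :: "'v set \<Rightarrow> 'v set set \<Rightarrow> bool" where
  "edges_within V E \<longleftrightarrow> (\<forall>e\<in>E. \<exists>x y. e = {x, y} \<and> x \<in> V \<and> y \<in> V)"

lemma ug_treeD:
  assumes "ug_tree V E"
  shows "x \<in> V \<Longrightarrow> y \<in> V \<Longrightarrow> linked E x y"
    and "{x, y} \<in> E \<Longrightarrow> x \<noteq> y \<Longrightarrow> \<not> linked (E - {{x, y}}) x y"
  using assms unfolding ug_tree_def all_bridges_def by blast+

lemma edges_withinE:
  assumes "edges_within V E" "e \<in> E"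
  obtains x y where "e = {x, y}" "x \<in> V" "y \<in> V"
  using assms unfolding edges_within_def by blast

lemma edges_within_Un: "edges_within V A \<Longrightarrow> edges_within V B \<Longrightarrow> edges_within V (A \<union> B)"
  unfolding edges_within_def by blast

lemma edges_within_insert:
  "edges_within V E \<Longrightarrow> x \<in> V \<Longrightarrow> y \<in> V \<Longrightarrow> edges_within V (insert {x, y} E)"
  unfolding edges_within_def by blast

lemma edges_within_empty: "edges_within V {}"
  unfolding edges_within_def by blast

lemma edges_within_mono: "edges_within V E \<Longrightarrow> V \<subseteq> W \<Longrightarrow> edges_within W E"
  unfolding edges_within_def by (meson subsetD)

subsection \<open>Contraction\<close>

definition collapsed :: "('v \<Rightarrow> 'w) \<Rightarrow> 'v set set \<Rightarrow> 'v set set" where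
  "collapsed \<phi> E = {e \<in> E. \<exists>z. \<phi> ` e = {z}}"

definition edge_image :: "('v \<Rightarrow> 'w) \<Rightarrow> 'v set set \<Rightarrow> 'w set set" where
  "edge_image \<phi> E = (\<lambda>e. \<phi> ` e) ` (E - collapsed \<phi> E)"

definition connected_fibres :: "('v \<Rightarrow> 'w) \<Rightarrow> 'v set \<Rightarrow> 'v set set \<Rightarrow> bool" where
  "connected_fibres \<phi> V E \<longleftrightarrow> (\<forall>x\<in>V. \<forall>y\<in>V. \<phi> x = \<phi> y \<longrightarrow> linked (collapsed \<phi> E) x y)"

lemma edge_image_Un: "edge_image \<phi> (A \<union> B) = edge_image \<phi> A \<union> edge_image \<phi> B"
  unfolding edge_image_def collapsed_def by blast

lemma edge_image_empty [simp]: "edge_image \<phi> {} = {}"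
  unfolding edge_image_def by simp

lemma edge_image_insert:
  "edge_image \<phi> (insert e E) =
    (if \<exists>z. \<phi> ` e = {z} then edge_image \<phi> E else insert (\<phi> ` e) (edge_image \<phi> E))"
  unfolding edge_image_def collapsed_def by auto

lemma edge_image_UN: "edge_image \<phi> (\<Union>k\<in>K. F k) = (\<Union>k\<in>K. edge_image \<phi> (F k))"
  unfolding edge_image_def collapsed_def by blast

lemma edge_image_doubleton: "\<phi> x \<noteq> \<phi> y \<Longrightarrow> edge_image \<phi> {{x, y}} = {{\<phi> x, \<phi> y}}"
  by (auto simp: edge_image_insert doubleton_eq_iff)

lemma image_doubleton_eqE:
  assumes "\<phi> ` {u, w} = {x', y'}"
  obtains x y where "{x, y} = {u, w}" "\<phi> x = x'" "\<phi> y = y'"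
  using assms by (auto simp: doubleton_eq_iff insert_commute)

lemma edges_within_orient:
  assumes "edges_within V E" "e \<in> E" "\<phi> ` e = {x', y'}"
  obtains x y where "e = {x, y}" "\<phi> x = x'" "\<phi> y = y'" "x \<in> V" "y \<in> V"
proof -
  obtain u w where uw: "e = {u, w}" "u \<in> V" "w \<in> V"
    using assms(1,2) by (rule edges_withinE)
  then have "\<phi> ` {u, w} = {x', y'}"
    using assms(3) by simp
  then obtain x y where "{x, y} = {u, w}" "\<phi> x = x'" "\<phi> y = y'"
    by (rule image_doubleton_eqE)
  moreover have "x \<in> V" "y \<in> V"
    using calculation(1) uw by (auto simp: doubleton_eq_iff)
  ultimately show thesis
    using that[of x y] uw(1) by simp
qed

lemma linked_edge_image:
  assumes "linked E x y"
  shows "linked (edge_image \<phi> E) (\<phi> x) (\<phi> y)"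
proof (rule linked_hom[OF _ assms])
  fix u v
  assume "{u, v} \<in> E"
  then show "linked (edge_image \<phi> E) (\<phi> u) (\<phi> v)"
  proof (cases "\<phi> u = \<phi> v")
    case False
    with \<open>{u, v} \<in> E\<close> have "{u, v} \<in> E - collapsed \<phi> E"
      by (auto simp: collapsed_def doubleton_eq_iff)
    then have "{\<phi> u, \<phi> v} \<in> edge_image \<phi> E"
      unfolding edge_image_def by (rule image_eqI[rotated]) simp
    then show ?thesis
      by (rule linked_edge)
  qed simp
qed

lemma linked_fibre_avoiding:
  assumes "connected_fibres \<phi> V E" "e \<in> E - collapsed \<phi> E" "x \<in> V" "y \<in> V" "\<phi> x = \<phi> y"
  shows "linked (E - {e}) x y"
proof -
  have "linked (collapsed \<phi> E) x y"
    using assms(1,3-5) unfolding connected_fibres_def by simp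
  moreover have "collapsed \<phi> E \<subseteq> E - {e}"
    using assms(2) by (auto simp: collapsed_def)
  ultimately show ?thesis
    by (rule linked_mono)
qed

text \<open>Image edges lift to edges other than \<open>e\<close>, and fibres are joined by collapsed edges, which
  differ from \<open>e\<close> as well.\<close>

lemma linked_lift:
  assumes E: "edges_within V E" and fibres: "connected_fibres \<phi> V E"
    and e: "e \<in> E - collapsed \<phi> E"
    and path: "linked (edge_image \<phi> E - {\<phi> ` e}) x' y'"
  shows "\<forall>x\<in>V. \<forall>y\<in>V. \<phi> x = x' \<longrightarrow> \<phi> y = y' \<longrightarrow> linked (E - {e}) x y"
  using path
proof (induction rule: rtrancl_induct)
  case base
  show ?case
    using linked_fibre_avoiding[OF fibres e] by simp
next
  case (step m' y')
  then have "{m', y'} \<in> edge_image \<phi> E" "{m', y'} \<noteq> \<phi> ` e"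
    by auto
  then obtain e' where e': "e' \<in> E - collapsed \<phi> E" "\<phi> ` e' = {m', y'}" "e' \<noteq> e"
    unfolding edge_image_def by auto
  obtain m z where mz: "e' = {m, z}" "\<phi> m = m'" "\<phi> z = y'" "m \<in> V" "z \<in> V"
    using edges_within_orient[OF E _ e'(2)] e'(1) by blast
  show ?case
  proof (intro ballI impI)
    fix x y
    assume xy: "x \<in> V" "y \<in> V" "\<phi> x = x'" "\<phi> y = y'"
    have "linked (E - {e}) x m"
      using step.IH xy(1,3) mz(2,4) by simp
    moreover have "linked (E - {e}) m z"
      using mz e' by (intro linked_edge) simp
    moreover have "linked (E - {e}) z y"
      using linked_fibre_avoiding[OF fibres e] xy mz by simp
    ultimately show "linked (E - {e}) x y"
      by (rule rtrancl_trans[OF rtrancl_trans])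
  qed
qed

theorem ug_tree_edge_image:
  assumes tree: "ug_tree V E" and E: "edges_within V E" and fibres: "connected_fibres \<phi> V E"
  shows "ug_tree (\<phi> ` V) (edge_image \<phi> E)"
  unfolding ug_tree_def all_bridges_def
proof (intro conjI ballI allI impI notI)
  fix x' y'
  assume "x' \<in> \<phi> ` V" "y' \<in> \<phi> ` V"
  then obtain x y where "x \<in> V" "y \<in> V" "x' = \<phi> x" "y' = \<phi> y"
    by blast
  then show "linked (edge_image \<phi> E) x' y'"
    using linked_edge_image[OF ug_treeD(1)[OF tree]] by simp
next
  fix x' y'
  assume edge: "{x', y'} \<in> edge_image \<phi> E" and "x' \<noteq> y'"
    and bypass: "linked (edge_image \<phi> E - {{x', y'}}) x' y'"
  from edge obtain e where e: "e \<in> E - collapsed \<phi> E" "\<phi> ` e = {x', y'}"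
    unfolding edge_image_def by auto
  obtain x y where xy: "e = {x, y}" "\<phi> x = x'" "\<phi> y = y'" "x \<in> V" "y \<in> V"
    using edges_within_orient[OF E _ e(2)] e(1) by blast
  have "linked (E - {e}) x y"
    using linked_lift[OF E fibres e(1)] bypass e(2) xy(2-5) by simp
  moreover have "x \<noteq> y"
    using xy \<open>x' \<noteq> y'\<close> by auto
  ultimately show False
    using ug_treeD(2)[OF tree] xy(1) e(1) by simp
qed

lemma connected_fibres_inj: "inj_on \<phi> V \<Longrightarrow> connected_fibres \<phi> V E"
  unfolding connected_fibres_def by (auto dest: inj_onD)

lemma connected_fibres_local:
  assumes "inj_on \<phi> (V - K)" "\<And>x y. x \<in> K \<Longrightarrow> y \<in> V - K \<Longrightarrow> \<phi> x \<noteq> \<phi> y"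
    and "\<And>x y. x \<in> K \<Longrightarrow> y \<in> K \<Longrightarrow> \<phi> x = \<phi> y \<Longrightarrow> linked (collapsed \<phi> E) x y"
  shows "connected_fibres \<phi> V E"
  unfolding connected_fibres_def
proof (intro ballI impI)
  fix x y
  assume "x \<in> V" "y \<in> V" "\<phi> x = \<phi> y"
  with assms(1,2) consider "x \<in> K" "y \<in> K" | "x = y"
    by (metis Diff_iff inj_onD)
  then show "linked (collapsed \<phi> E) x y"
    using assms(3) \<open>\<phi> x = \<phi> y\<close> by cases auto
qed

subsection \<open>Edge exchange\<close>

lemma linked_same_side:
  assumes "linked E x y"
  shows "linked E x u \<longleftrightarrow> linked E y u"
  using assms linked_sym rtrancl_trans by metis

text \<open>The side of \<open>S\<close> not containing \<open>x\<close> is collapsed onto the end of \<open>{w, v}\<close> on the side of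
  \<open>x\<close>; this maps the path to one that avoids \<open>{w, v}\<close>.\<close>

lemma linked_collapse_side:
  assumes path: "linked (insert {w, v} T - {{x, y}}) x y"
    and sides: "\<And>a b. {a, b} \<in> T \<Longrightarrow> a \<in> S \<longleftrightarrow> b \<in> S"
    and "w \<in> S" "v \<notin> S" "x \<in> S \<longleftrightarrow> y \<in> S"
  shows "linked (T - {{x, y}}) x y"
proof -
  define c where "c = (if x \<in> S then w else v)"
  define \<phi> where "\<phi> z = (if (z \<in> S) = (x \<in> S) then z else c)" for z
  have "linked (T - {{x, y}}) (\<phi> a) (\<phi> b)" if ab: "{a, b} \<in> insert {w, v} T - {{x, y}}" for a b
  proof (cases "{a, b} = {w, v}")
    case True
    then have "\<phi> a = \<phi> b"
      using \<open>w \<in> S\<close> \<open>v \<notin> S\<close> by (auto simp: \<phi>_def c_def doubleton_eq_iff)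
    then show ?thesis
      by simp
  next
    case False
    with ab have "{a, b} \<in> T - {{x, y}}"
      by simp
    then have "linked (T - {{x, y}}) a b"
      by (rule linked_edge)
    moreover have "\<phi> a = a \<and> \<phi> b = b \<or> \<phi> a = \<phi> b"
      using sides[of a b] \<open>{a, b} \<in> T - {{x, y}}\<close> by (auto simp: \<phi>_def)
    ultimately show ?thesis
      by auto
  qed
  then have "linked (T - {{x, y}}) (\<phi> x) (\<phi> y)"
    using path by (rule linked_hom)
  with \<open>x \<in> S \<longleftrightarrow> y \<in> S\<close> show ?thesis
    by (simp add: \<phi>_def)
qed

lemma ug_tree_exchange:
  assumes tree: "ug_tree V (insert {u, v} T)" and "{u, v} \<notin> T" "u \<noteq> v" "w \<in> V"
    and wu: "linked T w u"
  shows "ug_tree V (insert {w, v} T)"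
proof -
  define S where "S = {z. linked T z u}"
  have wv_sides: "w \<in> S" "v \<notin> S"
    using wu ug_treeD(2)[OF tree, of u v] \<open>{u, v} \<notin> T\<close> \<open>u \<noteq> v\<close> linked_sym[of v u T]
    by (auto simp: S_def)
  have sides: "a \<in> S \<longleftrightarrow> b \<in> S" if "linked T a b" for a b
    using linked_same_side[OF that] by (simp add: S_def)
  have "linked (insert {w, v} T) u w"
    using linked_mono[OF linked_sym[OF wu]] by blast
  then have "linked (insert {w, v} T) u v"
    using linked_edge[of w v "insert {w, v} T"] by (meson insertI1 rtrancl_trans)
  then have "linked (insert {w, v} T) x y" if "x \<in> V" "y \<in> V" for x y
    using ug_treeD(1)[OF tree that] by (rule linked_replace_edge[rotated 2]) blast
  moreover have "\<not> linked (insert {w, v} T - {{x, y}}) x y"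
    if xy: "{x, y} \<in> insert {w, v} T" "x \<noteq> y" for x y
  proof
    assume bypass: "linked (insert {w, v} T - {{x, y}}) x y"
    show False
    proof (cases "{x, y} = {w, v}")
      case True
      then have "linked T x y"
        using linked_mono[OF bypass] by blast
      with True wv_sides sides show False
        by (auto simp: doubleton_eq_iff)
    next
      case False
      with xy have "{x, y} \<in> T"
        by simp
      then have "linked (T - {{x, y}}) x y"
        using linked_collapse_side[OF bypass _ wv_sides] sides linked_edge by metis
      then have "linked (insert {u, v} T - {{x, y}}) x y"
        by (rule linked_mono) blast
      with \<open>{x, y} \<in> T\<close> ug_treeD(2)[OF tree] xy(2) show False
        by blast
    qed
  qed
  ultimately show ?thesis
    unfolding ug_tree_def all_bridges_def by blast
qed

text \<open>Graph core of the multiplicative step: \<open>c\<close> is the cut between the par node \<open>p\<close> with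
  children \<open>a\<close>, \<open>b\<close> and the tensor node \<open>t\<close> with children \<open>b'\<close>, \<open>a'\<close>, \<open>H\<close> is the rest of
  the graph, and \<open>left\<close> and \<open>right\<close> are the two switchings of \<open>p\<close>. In the left one, \<open>b\<close> reaches
  \<open>c\<close> through \<open>a\<close>, \<open>a'\<close> or \<open>b'\<close>; through \<open>a'\<close> or \<open>b'\<close> it would bypass the bridge \<open>{p, b}\<close> of the
  right one.\<close>

lemma linked_par_children:
  assumes H: "edges_within VH H"
    and fresh: "c \<notin> VH" "p \<notin> VH" "t \<notin> VH" and cpt: "c \<noteq> p" "c \<noteq> t" "p \<noteq> t"
    and VH: "a \<in> VH" "b \<in> VH" "a' \<in> VH" "b' \<in> VH"
    and left: "ug_tree (VH \<union> {c, p, t}) (H \<union> {{p, a}, {c, p}, {c, t}, {t, a'}, {t, b'}})"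
    and right: "ug_tree (VH \<union> {c, p, t}) (H \<union> {{p, b}, {c, p}, {c, t}, {t, a'}, {t, b'}})"
  shows "linked H b a"
proof -
  have H_off: "e \<inter> {c, p, t} = {}" if "e \<in> H" for e
    using edges_withinE[OF H that] fresh by blast
  have "linked (H \<union> {{p, a}, {c, p}, {c, t}, {t, a'}, {t, b'}}) b c"
    using ug_treeD(1)[OF left] VH by simp
  then have "\<exists>e\<in>{{p, a}, {c, p}, {c, t}, {t, a'}, {t, b'}}. \<exists>q\<in>e. q \<notin> {c, p, t} \<and> linked H b q"
    by (rule linked_exit) (use H_off VH fresh in auto)
  then obtain q where "q \<in> {a, a', b'}" "linked H b q"
    by blast
  moreover have "q \<notin> {a', b'}"
  proof
    assume "q \<in> {a', b'}"
    let ?R = "H \<union> {{p, b}, {c, p}, {c, t}, {t, a'}, {t, b'}} - {{p, b}}"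
    have "linked ?R p c" "linked ?R c t" "linked ?R t q"
      using \<open>q \<in> {a', b'}\<close> cpt VH fresh by (auto intro!: linked_edge simp: doubleton_eq_iff)
    moreover have "H \<subseteq> ?R"
      using H_off by blast
    then have "linked ?R q b"
      by (rule linked_mono[OF linked_sym[OF \<open>linked H b q\<close>]])
    ultimately have "linked ?R p b"
      by (meson rtrancl_trans)
    then show False
      using ug_treeD(2)[OF right, of p b] VH fresh by auto
  qed
  ultimately show ?thesis
    by auto
qed

text \<open>Two exchanges turn the right switching into the reduct; the second one needs the path from
  \<open>a\<close> to \<open>b\<close> in \<open>H\<close>.\<close>

lemma ug_tree_mult_reduct:
  assumes H: "edges_within VH H"
    and fresh: "c \<notin> VH" "p \<notin> VH" "t \<notin> VH" and cpt: "c \<noteq> p" "c \<noteq> t" "p \<noteq> t"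
    and VH: "a \<in> VH" "b \<in> VH" "a' \<in> VH" "b' \<in> VH" and "a' \<noteq> b'"
    and left: "ug_tree (VH \<union> {c, p, t}) (H \<union> {{p, a}, {c, p}, {c, t}, {t, a'}, {t, b'}})"
    and right: "ug_tree (VH \<union> {c, p, t}) (H \<union> {{p, b}, {c, p}, {c, t}, {t, a'}, {t, b'}})"
  shows "ug_tree (VH \<union> {c, p, t}) (H \<union> {{c, a}, {c, t}, {t, a'}, {p, b}, {p, b'}})"
proof -
  have notH: "{x, y} \<notin> H" if "x \<in> {c, p, t}" for x y
    using edges_withinE[OF H] fresh that by (metis doubleton_eq_iff insertE singletonD)
  let ?H4 = "H \<union> {{p, b}, {c, t}, {t, a'}, {p, b'}}"
  have "ug_tree (VH \<union> {c, p, t}) (insert {t, b'} (H \<union> {{p, b}, {c, p}, {c, t}, {t, a'}}))"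
    using right by (simp add: insert_commute)
  then have "ug_tree (VH \<union> {c, p, t}) (insert {p, b'} (H \<union> {{p, b}, {c, p}, {c, t}, {t, a'}}))"
  proof (rule ug_tree_exchange)
    show "{t, b'} \<notin> H \<union> {{p, b}, {c, p}, {c, t}, {t, a'}}"
      using notH[of t b'] cpt fresh VH \<open>a' \<noteq> b'\<close> by (auto simp: doubleton_eq_iff)
    show "linked (H \<union> {{p, b}, {c, p}, {c, t}, {t, a'}}) p t"
      by (rule rtrancl_trans[OF linked_edge linked_edge, of p c]) auto
  qed (use VH fresh in auto)
  then have "ug_tree (VH \<union> {c, p, t}) (insert {p, c} ?H4)"
    by (simp add: insert_commute)
  then have "ug_tree (VH \<union> {c, p, t}) (insert {a, c} ?H4)"
  proof (rule ug_tree_exchange)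
    show "{p, c} \<notin> ?H4"
      using notH[of p c] cpt fresh VH by (auto simp: doubleton_eq_iff)
    have "linked ?H4 a b"
      using linked_mono[OF linked_sym[OF linked_par_children[OF assms(1-11) left right]]] by blast
    moreover have "linked ?H4 b p"
      by (rule linked_edge) (simp add: insert_commute)
    ultimately show "linked ?H4 a p"
      by (rule rtrancl_trans)
  qed (use VH fresh cpt in auto)
  then show ?thesis
    by (simp add: insert_commute)
qed

definition node_embedding :: "(bool list \<Rightarrow> vtx) \<Rightarrow> bool" where
  "node_embedding f \<longleftrightarrow> inj f \<and> (\<forall>r i. f r \<noteq> VL i)"

lemma node_embedding_VP: "node_embedding VP"
  and node_embedding_VG: "node_embedding (VG k)"
  unfolding node_embedding_def inj_def by simp_all

definition node_edges :: "(vtx \<Rightarrow> bool) \<Rightarrow> vtx \<Rightarrow> conn \<Rightarrow> vtx \<Rightarrow> vtx \<Rightarrow> vtx set set" where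
  "node_edges s v c x y =
    (if c = Par then (if s v then {{v, y}} else {{v, x}}) else {{v, x}, {v, y}})"

lemma tedges_Node:
  "tedges s f p (Node c A B) =
    node_edges s (f p) c (troot f (p @ [False]) A) (troot f (p @ [True]) B)
      \<union> tedges s f (p @ [False]) A \<union> tedges s f (p @ [True]) B"
  by (simp add: node_edges_def Let_def)

lemma tverts_memD:
  "x \<in> tverts f p T \<Longrightarrow> (\<exists>r. x = f (p @ r)) \<or> (\<exists>i l. x = VL i \<and> (i, l) \<in> set (leaves T))"
proof (induction T arbitrary: p)
  case (Node c A B)
  then consider "x = f p" | "x \<in> tverts f (p @ [False]) A" | "x \<in> tverts f (p @ [True]) B"
    by auto
  then show ?case
  proof cases
    case 1
    then show ?thesis by (metis append_Nil2)
  next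
    case 2
    from Node.IH(1)[OF this] show ?thesis by auto
  next
    case 3
    from Node.IH(2)[OF this] show ?thesis by auto
  qed
qed auto

lemma troot_in_tverts: "troot f p T \<in> tverts f p T"
  by (cases T) auto

lemma node_neq_troot_child: "node_embedding f \<Longrightarrow> f p \<noteq> troot f (p @ [b]) A"
  by (cases A) (auto simp: node_embedding_def inj_def)

lemma edges_within_tedges: "edges_within (tverts f p T) (tedges s f p T)"
proof (induction T arbitrary: p)
  case (Node c A B)
  let ?V = "tverts f p (Node c A B)"
  have "f p \<in> ?V" "troot f (p @ [False]) A \<in> ?V" "troot f (p @ [True]) B \<in> ?V"
    using troot_in_tverts[of f "p @ [False]" A] troot_in_tverts[of f "p @ [True]" B] by auto
  then have "edges_within ?V (node_edges s (f p) c (troot f (p @ [False]) A) (troot f (p @ [True]) B))"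
    unfolding node_edges_def by (auto intro!: edges_within_insert edges_within_empty)
  moreover have "edges_within ?V (tedges s f (p @ [False]) A)"
    by (rule edges_within_mono[OF Node.IH(1)]) auto
  moreover have "edges_within ?V (tedges s f (p @ [True]) B)"
    by (rule edges_within_mono[OF Node.IH(2)]) auto
  ultimately show ?case
    unfolding tedges_Node by (intro edges_within_Un)
qed (simp add: edges_within_empty)

lemma tedges_subset_tverts: "e \<in> tedges s f p T \<Longrightarrow> e \<subseteq> tverts f p T"
  using edges_withinE[OF edges_within_tedges] by (metis empty_subsetI insert_subset)

definition loopfree :: "'v set set \<Rightarrow> bool" where
  "loopfree E \<longleftrightarrow> (\<forall>e\<in>E. \<forall>z. e \<noteq> {z})"

lemma loopfree_tedges: "node_embedding f \<Longrightarrow> loopfree (tedges s f p T)"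
proof (induction T arbitrary: p)
  case (Node c A B)
  have "f p \<noteq> troot f (p @ [False]) A" "f p \<noteq> troot f (p @ [True]) B"
    using node_neq_troot_child[OF Node.prems] by auto
  then have "loopfree (node_edges s (f p) c (troot f (p @ [False]) A) (troot f (p @ [True]) B))"
    unfolding loopfree_def node_edges_def by (auto simp: doubleton_eq_iff)
  with Node show ?case
    unfolding tedges_Node loopfree_def by blast
qed (simp add: loopfree_def)

lemma edge_image_id:
  assumes "\<forall>e\<in>E. \<forall>x\<in>e. \<phi> x = x" "loopfree E"
  shows "edge_image \<phi> E = E"
proof -
  have "\<phi> ` e = e" if "e \<in> E" for e
    using assms(1) that by force
  moreover have "e \<notin> collapsed \<phi> E" if "e \<in> E" for e
    using assms(2) that calculation unfolding loopfree_def collapsed_def by force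
  ultimately show ?thesis
    unfolding edge_image_def by force
qed

lemma tedges_cong: "\<forall>x\<in>tverts f p T. s x = s' x \<Longrightarrow> tedges s f p T = tedges s' f p T"
  by (induction T arbitrary: p) (auto simp: Let_def)

lemma edge_image_node_edges:
  assumes "\<phi> v = w" "s v = s' w" "w \<noteq> \<phi> x" "w \<noteq> \<phi> y"
  shows "edge_image \<phi> (node_edges s v c x y) = node_edges s' w c (\<phi> x) (\<phi> y)"
proof -
  have single: "edge_image \<phi> {{v, z}} = {{w, \<phi> z}}" if "w \<noteq> \<phi> z" for z
    using edge_image_doubleton[of \<phi> v z] assms(1) that by simp
  have "edge_image \<phi> {{v, x}, {v, y}} = edge_image \<phi> {{v, x}} \<union> edge_image \<phi> {{v, y}}"
    by (simp only: insert_is_Un[of "{v, x}" "{{v, y}}"] edge_image_Un)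
  also have "\<dots> = {{w, \<phi> x}, {w, \<phi> y}}"
    using single assms(3,4) by auto
  finally show ?thesis
    using single assms unfolding node_edges_def by simp
qed

lemma tverts_tedges_relabel:
  assumes "\<forall>r. \<phi> (f (p @ r)) = g (q @ r)" "\<forall>r. s (f (p @ r)) = s' (g (q @ r))"
    and "\<forall>i l. (i, l) \<in> set (leaves T) \<longrightarrow> \<phi> (VL i) = VL i" "node_embedding g"
  shows "\<phi> ` tverts f p T = tverts g q T \<and> edge_image \<phi> (tedges s f p T) = tedges s' g q T
    \<and> \<phi> (troot f p T) = troot g q T"
  using assms(1-3)
proof (induction T arbitrary: p q)
  case (Node c A B)
  have IA: "\<phi> ` tverts f (p @ [False]) A = tverts g (q @ [False]) A
      \<and> edge_image \<phi> (tedges s f (p @ [False]) A) = tedges s' g (q @ [False]) A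
      \<and> \<phi> (troot f (p @ [False]) A) = troot g (q @ [False]) A"
    by (rule Node.IH(1)) (use Node.prems in auto)
  have IB: "\<phi> ` tverts f (p @ [True]) B = tverts g (q @ [True]) B
      \<and> edge_image \<phi> (tedges s f (p @ [True]) B) = tedges s' g (q @ [True]) B
      \<and> \<phi> (troot f (p @ [True]) B) = troot g (q @ [True]) B"
    by (rule Node.IH(2)) (use Node.prems in auto)
  have root: "\<phi> (f p) = g q" "s (f p) = s' (g q)"
    using Node.prems(1,2) by (metis append_Nil2)+
  have "g q \<noteq> troot g (q @ [False]) A" "g q \<noteq> troot g (q @ [True]) B"
    using node_neq_troot_child[OF assms(4)] by auto
  then have "edge_image \<phi> (node_edges s (f p) c (troot f (p @ [False]) A) (troot f (p @ [True]) B))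
      = node_edges s' (g q) c (troot g (q @ [False]) A) (troot g (q @ [True]) B)"
    using IA IB Node.prems root by (simp add: edge_image_node_edges)
  with IA IB root show ?case
    unfolding tedges_Node edge_image_Un by (simp add: image_Un)
qed simp

lemma edge_image_tedges_id:
  assumes "node_embedding f" "\<forall>x\<in>tverts f p T. \<phi> x = x"
  shows "edge_image \<phi> (tedges s f p T) = tedges s f p T"
proof (rule edge_image_id)
  show "\<forall>e\<in>tedges s f p T. \<forall>x\<in>e. \<phi> x = x"
    using assms(2) tedges_subset_tverts by blast
  show "loopfree (tedges s f p T)"
    by (rule loopfree_tedges[OF assms(1)])
qed

fun hole_pos :: "'a ctx \<Rightarrow> bool list" where
  "hole_pos Hole = []"
| "hole_pos (CL c C B) = False # hole_pos C"
| "hole_pos (CR c A C) = True # hole_pos C"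

fun leaves_before :: "'a ctx \<Rightarrow> (nat \<times> 'a lit) list" where
  "leaves_before Hole = []"
| "leaves_before (CL c C B) = leaves_before C"
| "leaves_before (CR c A C) = leaves A @ leaves_before C"

fun leaves_after :: "'a ctx \<Rightarrow> (nat \<times> 'a lit) list" where
  "leaves_after Hole = []"
| "leaves_after (CL c C B) = leaves_after C @ leaves B"
| "leaves_after (CR c A C) = leaves_after C"

fun ctx_cutfree :: "'a ctx \<Rightarrow> bool" where
  "ctx_cutfree Hole = True"
| "ctx_cutfree (CL c C B) = (c \<noteq> CutC \<and> ctx_cutfree C \<and> cutfree B)"
| "ctx_cutfree (CR c A C) = (c \<noteq> CutC \<and> cutfree A \<and> ctx_cutfree C)"

text \<open>The part of the switching graph of \<open>plug C X\<close> outside \<open>X\<close>; \<open>r\<close> is the root of \<open>X\<close>.\<close>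

fun ctx_verts :: "(bool list \<Rightarrow> vtx) \<Rightarrow> bool list \<Rightarrow> 'a ctx \<Rightarrow> vtx set" where
  "ctx_verts f p Hole = {}"
| "ctx_verts f p (CL c C B) = {f p} \<union> ctx_verts f (p @ [False]) C \<union> tverts f (p @ [True]) B"
| "ctx_verts f p (CR c A C) = {f p} \<union> tverts f (p @ [False]) A \<union> ctx_verts f (p @ [True]) C"

fun ctx_root :: "(bool list \<Rightarrow> vtx) \<Rightarrow> bool list \<Rightarrow> 'a ctx \<Rightarrow> vtx \<Rightarrow> vtx" where
  "ctx_root f p Hole r = r"
| "ctx_root f p (CL c C B) r = f p"
| "ctx_root f p (CR c A C) r = f p"

fun ctx_edges :: "(vtx \<Rightarrow> bool) \<Rightarrow> (bool list \<Rightarrow> vtx) \<Rightarrow> bool list \<Rightarrow> 'a ctx \<Rightarrow> vtx \<Rightarrow> vtx set set" where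
  "ctx_edges s f p Hole r = {}"
| "ctx_edges s f p (CL c C B) r =
    node_edges s (f p) c (ctx_root f (p @ [False]) C r) (troot f (p @ [True]) B)
      \<union> ctx_edges s f (p @ [False]) C r \<union> tedges s f (p @ [True]) B"
| "ctx_edges s f p (CR c A C) r =
    node_edges s (f p) c (troot f (p @ [False]) A) (ctx_root f (p @ [True]) C r)
      \<union> tedges s f (p @ [False]) A \<union> ctx_edges s f (p @ [True]) C r"

lemma leaves_plug: "leaves (plug C X) = leaves_before C @ leaves X @ leaves_after C"
  by (induction C) auto

lemma cutfree_plug: "cutfree (plug C X) \<longleftrightarrow> ctx_cutfree C \<and> cutfree X"
  by (induction C) auto

lemma tverts_plug: "tverts f p (plug C X) = ctx_verts f p C \<union> tverts f (p @ hole_pos C) X"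
  by (induction C arbitrary: p) auto

lemma troot_plug: "troot f p (plug C X) = ctx_root f p C (troot f (p @ hole_pos C) X)"
  by (cases C) auto

lemma tedges_plug:
  "tedges s f p (plug C X) = ctx_edges s f p C (troot f (p @ hole_pos C) X) \<union> tedges s f (p @ hole_pos C) X"
proof (induction C arbitrary: p)
  case (CL c C B)
  show ?case
    unfolding plug.simps tedges_Node ctx_edges.simps troot_plug CL.IH by (simp add: Un_ac)
next
  case (CR c A C)
  show ?case
    unfolding plug.simps tedges_Node ctx_edges.simps troot_plug CR.IH by (simp add: Un_ac)
qed simp

lemma ctx_verts_memD:
  "x \<in> ctx_verts f p C \<Longrightarrow>
    (\<exists>r. x = f r \<and> \<not> prefix (p @ hole_pos C) r) \<or>
    (\<exists>i l. x = VL i \<and> (i, l) \<in> set (leaves_before C @ leaves_after C))"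
proof (induction C arbitrary: p)
  case (CL c C B)
  then consider "x = f p" | "x \<in> ctx_verts f (p @ [False]) C" | "x \<in> tverts f (p @ [True]) B"
    by auto
  then show ?case
  proof cases
    case 1
    then show ?thesis by (auto dest: prefix_length_le)
  next
    case 2
    from CL.IH[OF this] show ?thesis by auto
  next
    case 3
    from tverts_memD[OF this] show ?thesis by auto
  qed
next
  case (CR c A C)
  then consider "x = f p" | "x \<in> tverts f (p @ [False]) A" | "x \<in> ctx_verts f (p @ [True]) C"
    by auto
  then show ?case
  proof cases
    case 1
    then show ?thesis by (auto dest: prefix_length_le)
  next
    case 2
    from tverts_memD[OF this] show ?thesis by auto
  next
    case 3
    from CR.IH[OF this] show ?thesis by auto
  qed
qed simp

lemma hole_node_notin_ctx_verts: "node_embedding f \<Longrightarrow> f (p @ hole_pos C) \<notin> ctx_verts f p C"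
  using ctx_verts_memD[of "f (p @ hole_pos C)" f p C] by (auto simp: node_embedding_def inj_def)

lemma ctx_edges_cong: "\<forall>x\<in>ctx_verts f p C. s x = s' x \<Longrightarrow> ctx_edges s f p C r = ctx_edges s' f p C r"
proof (induction C arbitrary: p)
  case (CL c C B)
  have "tedges s f (p @ [True]) B = tedges s' f (p @ [True]) B"
    using CL.prems by (intro tedges_cong) simp
  with CL show ?case
    by (simp add: node_edges_def)
next
  case (CR c A C)
  have "tedges s f (p @ [False]) A = tedges s' f (p @ [False]) A"
    using CR.prems by (intro tedges_cong) simp
  with CR show ?case
    by (simp add: node_edges_def)
qed simp

lemma ctx_edges_image:
  assumes f: "node_embedding f" and fixed: "\<forall>x\<in>ctx_verts f p C. \<phi> x = x"
    and r: "\<phi> r \<notin> ctx_verts f p C"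
  shows "edge_image \<phi> (ctx_edges s f p C r) = ctx_edges s f p C (\<phi> r)"
  using fixed r
proof (induction C arbitrary: p)
  case (CL c C B)
  have root: "\<phi> (ctx_root f (p @ [False]) C r) = ctx_root f (p @ [False]) C (\<phi> r)"
    "f p \<noteq> ctx_root f (p @ [False]) C (\<phi> r)"
    using CL.prems f by (cases C; auto simp: node_embedding_def inj_def)+
  have "\<phi> (troot f (p @ [True]) B) = troot f (p @ [True]) B"
    using CL.prems troot_in_tverts[of f "p @ [True]" B] by auto
  moreover have "f p \<noteq> troot f (p @ [True]) B"
    by (rule node_neq_troot_child[OF f])
  moreover have "edge_image \<phi> (tedges s f (p @ [True]) B) = tedges s f (p @ [True]) B"
    using CL.prems by (intro edge_image_tedges_id[OF f]) auto
  ultimately show ?case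
    using CL root by (simp add: edge_image_Un edge_image_node_edges)
next
  case (CR c A C)
  have root: "\<phi> (ctx_root f (p @ [True]) C r) = ctx_root f (p @ [True]) C (\<phi> r)"
    "f p \<noteq> ctx_root f (p @ [True]) C (\<phi> r)"
    using CR.prems f by (cases C; auto simp: node_embedding_def inj_def)+
  have "\<phi> (troot f (p @ [False]) A) = troot f (p @ [False]) A"
    using CR.prems troot_in_tverts[of f "p @ [False]" A] by auto
  moreover have "f p \<noteq> troot f (p @ [False]) A"
    by (rule node_neq_troot_child[OF f])
  moreover have "edge_image \<phi> (tedges s f (p @ [False]) A) = tedges s f (p @ [False]) A"
    using CR.prems by (intro edge_image_tedges_id[OF f]) auto
  ultimately show ?case
    using CR root by (simp add: edge_image_Un edge_image_node_edges)
qed simp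

definition seq_verts :: "'a ftree list \<Rightarrow> vtx set" where
  "seq_verts \<Gamma> = (\<Union>k<length \<Gamma>. tverts (VG k) [] (\<Gamma> ! k))"

definition seq_edges :: "(vtx \<Rightarrow> bool) \<Rightarrow> 'a ftree list \<Rightarrow> vtx set set" where
  "seq_edges s \<Gamma> = (\<Union>k<length \<Gamma>. tedges s (VG k) [] (\<Gamma> ! k))"

lemma graph_verts_eq: "graph_verts P \<Gamma> = tverts VP [] P \<union> seq_verts \<Gamma>"
  unfolding graph_verts_def seq_verts_def ..

lemma switch_edges_eq: "switch_edges s P \<Gamma> = tedges s VP [] P \<union> seq_edges s \<Gamma>"
  unfolding switch_edges_def seq_edges_def ..

lemma seq_verts_snoc: "seq_verts (\<Delta> @ [X]) = seq_verts \<Delta> \<union> tverts (VG (length \<Delta>)) [] X"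
  unfolding seq_verts_def by (simp add: lessThan_Suc nth_append Un_commute)

lemma seq_edges_snoc: "seq_edges s (\<Delta> @ [X]) = seq_edges s \<Delta> \<union> tedges s (VG (length \<Delta>)) [] X"
  unfolding seq_edges_def by (simp add: lessThan_Suc nth_append Un_commute)

lemma graph_verts_snoc: "graph_verts P (\<Delta> @ [X]) = graph_verts P \<Delta> \<union> tverts (VG (length \<Delta>)) [] X"
  by (simp add: graph_verts_eq seq_verts_snoc Un_assoc)

lemma switch_edges_snoc: "switch_edges s P (\<Delta> @ [X]) = switch_edges s P \<Delta> \<union> tedges s (VG (length \<Delta>)) [] X"
  by (simp add: switch_edges_eq seq_edges_snoc Un_assoc)

lemma graph_verts_append2:
  "graph_verts P (\<Delta> @ [X, Y]) = graph_verts P \<Delta> \<union> tverts (VG (length \<Delta>)) [] X \<union> tverts (VG (Suc (length \<Delta>))) [] Y"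
  using graph_verts_snoc[of P "\<Delta> @ [X]" Y] by (simp add: graph_verts_snoc)

lemma switch_edges_append2:
  "switch_edges s P (\<Delta> @ [X, Y]) = switch_edges s P \<Delta> \<union> tedges s (VG (length \<Delta>)) [] X \<union> tedges s (VG (Suc (length \<Delta>))) [] Y"
  using switch_edges_snoc[of s P "\<Delta> @ [X]" Y] by (simp add: switch_edges_snoc)

lemma seq_verts_memD:
  assumes "x \<in> seq_verts \<Delta>"
  shows "(\<exists>m r. x = VG m r \<and> m < length \<Delta>) \<or> (\<exists>i l. x = VL i \<and> (i, l) \<in> set (concat (map leaves \<Delta>)))"
proof -
  obtain k where k: "k < length \<Delta>" "x \<in> tverts (VG k) [] (\<Delta> ! k)"
    using assms unfolding seq_verts_def by blast
  then have "\<Delta> ! k \<in> set \<Delta>"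
    by simp
  with k tverts_memD[OF k(2)] show ?thesis
    by auto
qed

lemma edges_within_seq_edges: "edges_within (seq_verts \<Delta>) (seq_edges s \<Delta>)"
  unfolding edges_within_def
proof
  fix e
  assume "e \<in> seq_edges s \<Delta>"
  then obtain k where k: "k < length \<Delta>" "e \<in> tedges s (VG k) [] (\<Delta> ! k)"
    unfolding seq_edges_def by blast
  then obtain x y where "e = {x, y}" "x \<in> tverts (VG k) [] (\<Delta> ! k)" "y \<in> tverts (VG k) [] (\<Delta> ! k)"
    using edges_withinE[OF edges_within_tedges] by metis
  with k show "\<exists>x y. e = {x, y} \<and> x \<in> seq_verts \<Delta> \<and> y \<in> seq_verts \<Delta>"
    unfolding seq_verts_def by blast
qed

lemma edges_within_switch_edges: "edges_within (graph_verts P \<Gamma>) (switch_edges s P \<Gamma>)"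
  unfolding graph_verts_eq switch_edges_eq
  using edges_within_tedges edges_within_seq_edges by (blast intro: edges_within_Un edges_within_mono)

lemma loopfree_seq_edges: "loopfree (seq_edges s \<Delta>)"
  using loopfree_tedges[OF node_embedding_VG] unfolding seq_edges_def loopfree_def by blast

lemma edge_image_seq_edges_id:
  assumes "\<forall>x\<in>seq_verts \<Delta>. \<phi> x = x"
  shows "edge_image \<phi> (seq_edges s \<Delta>) = seq_edges s \<Delta>"
proof (rule edge_image_id[OF _ loopfree_seq_edges])
  show "\<forall>e\<in>seq_edges s \<Delta>. \<forall>x\<in>e. \<phi> x = x"
    using assms edges_withinE[OF edges_within_seq_edges] by (metis insert_iff singletonD)
qed

lemma seq_edges_cong:
  assumes "\<forall>x\<in>seq_verts \<Delta>. s x = s' x"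
  shows "seq_edges s \<Delta> = seq_edges s' \<Delta>"
proof -
  have "tedges s (VG k) [] (\<Delta> ! k) = tedges s' (VG k) [] (\<Delta> ! k)" if "k < length \<Delta>" for k
    using assms that by (intro tedges_cong) (auto simp: seq_verts_def)
  then show ?thesis
    unfolding seq_edges_def by simp
qed

lemma switch_edges_cong: "\<forall>x\<in>graph_verts P \<Gamma>. s x = s' x \<Longrightarrow> switch_edges s P \<Gamma> = switch_edges s' P \<Gamma>"
  unfolding graph_verts_eq switch_edges_eq using tedges_cong seq_edges_cong by (metis UnCI)

lemma edge_image_switch_edges_id:
  assumes "\<forall>x\<in>graph_verts P \<Gamma>. \<phi> x = x"
  shows "edge_image \<phi> (switch_edges s P \<Gamma>) = switch_edges s P \<Gamma>"
  using assms edge_image_tedges_id[OF node_embedding_VP] edge_image_seq_edges_id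
  unfolding graph_verts_eq switch_edges_eq edge_image_Un by (metis UnCI)

lemma correct_iff_ug_tree:
  "correct P \<Gamma> \<longleftrightarrow> pre_proof_graph P \<Gamma> \<and> (\<forall>s. ug_tree (graph_verts P \<Gamma>) (switch_edges s P \<Gamma>))"
  unfolding correct_def ug_tree_def ug_connected_def ug_acyclic_iff_all_bridges edge_rel_def
  by blast

lemma correct_if_switchings_contract:
  assumes "correct P \<Gamma>" "pre_proof_graph P' \<Gamma>'"
    and "\<And>s'. \<exists>s \<phi>. connected_fibres \<phi> (graph_verts P \<Gamma>) (switch_edges s P \<Gamma>)
      \<and> \<phi> ` graph_verts P \<Gamma> = graph_verts P' \<Gamma>' \<and> edge_image \<phi> (switch_edges s P \<Gamma>) = switch_edges s' P' \<Gamma>'"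
  shows "correct P' \<Gamma>'"
  unfolding correct_iff_ug_tree
proof (intro conjI allI)
  fix s'
  obtain s \<phi> where "connected_fibres \<phi> (graph_verts P \<Gamma>) (switch_edges s P \<Gamma>)"
      "\<phi> ` graph_verts P \<Gamma> = graph_verts P' \<Gamma>'" "edge_image \<phi> (switch_edges s P \<Gamma>) = switch_edges s' P' \<Gamma>'"
    using assms(3) by blast
  with ug_tree_edge_image[OF _ edges_within_switch_edges] assms(1)
  show "ug_tree (graph_verts P' \<Gamma>') (switch_edges s' P' \<Gamma>')"
    unfolding correct_iff_ug_tree by metis
qed (rule assms(2))

section \<open>Invariance under reordering the sequent\<close>

lemma UN_permutes: "\<pi> permutes A \<Longrightarrow> (\<Union>k\<in>A. F (\<pi> k)) = (\<Union>k\<in>A. F k)"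
proof -
  assume "\<pi> permutes A"
  then have "\<pi> ` A = A"
    by (rule permutes_image)
  then show ?thesis
    by (metis image_image)
qed

lemma pre_proof_graph_mset_cong:
  assumes "pre_proof_graph P \<Gamma>" "mset \<Gamma>' = mset \<Gamma>"
  shows "pre_proof_graph P \<Gamma>'"
proof -
  have "mset (concat (map leaves \<Gamma>')) = mset (concat (map leaves \<Gamma>))"
    using assms(2) by (simp add: mset_concat mset_map flip: sum_mset_sum_list)
  moreover have "set \<Gamma>' = set \<Gamma>"
    using assms(2) by (metis set_mset_mset)
  ultimately show ?thesis
    using assms(1) unfolding pre_proof_graph_def by simp
qed

definition reindex_vertex :: "(nat \<Rightarrow> nat) \<Rightarrow> vtx \<Rightarrow> vtx" where
  "reindex_vertex \<pi> v = (case v of VG k r \<Rightarrow> VG (\<pi> k) r | _ \<Rightarrow> v)"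

lemma reindex_switching_graph:
  assumes \<pi>: "\<pi> permutes {..<length \<Gamma>'}" "permute_list \<pi> \<Gamma>' = \<Gamma>"
  shows "reindex_vertex \<pi> ` graph_verts P \<Gamma> = graph_verts P \<Gamma>'"
    and "edge_image (reindex_vertex \<pi>) (switch_edges (s \<circ> reindex_vertex \<pi>) P \<Gamma>) = switch_edges s P \<Gamma>'"
proof -
  let ?\<phi> = "reindex_vertex \<pi>"
  have length: "length \<Gamma> = length \<Gamma>'"
    using \<pi>(2) by auto
  have P: "?\<phi> ` tverts VP [] P = tverts VP [] P \<and> edge_image ?\<phi> (tedges (s \<circ> ?\<phi>) VP [] P) = tedges s VP [] P"
    using tverts_tedges_relabel[of ?\<phi> VP "[]" VP "[]" "s \<circ> ?\<phi>" s P]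
    by (simp add: reindex_vertex_def node_embedding_VP)
  have \<Gamma>: "?\<phi> ` tverts (VG k) [] (\<Gamma> ! k) = tverts (VG (\<pi> k)) [] (\<Gamma>' ! \<pi> k)
      \<and> edge_image ?\<phi> (tedges (s \<circ> ?\<phi>) (VG k) [] (\<Gamma> ! k)) = tedges s (VG (\<pi> k)) [] (\<Gamma>' ! \<pi> k)"
    if "k < length \<Gamma>" for k
    using tverts_tedges_relabel[of ?\<phi> "VG k" "[]" "VG (\<pi> k)" "[]" "s \<circ> ?\<phi>" s "\<Gamma> ! k"]
      permute_list_nth[OF \<pi>(1)] \<pi>(2) that length
    by (simp add: reindex_vertex_def node_embedding_VG)
  have "?\<phi> ` graph_verts P \<Gamma> = tverts VP [] P \<union> (\<Union>k<length \<Gamma>. tverts (VG (\<pi> k)) [] (\<Gamma>' ! \<pi> k))"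
    unfolding graph_verts_def image_Un image_UN using P \<Gamma> by simp
  also have "\<dots> = graph_verts P \<Gamma>'"
    using UN_permutes[OF \<pi>(1), where F = "\<lambda>j. tverts (VG j) [] (\<Gamma>' ! j)"]
    by (simp add: graph_verts_def length lessThan_def)
  finally show "?\<phi> ` graph_verts P \<Gamma> = graph_verts P \<Gamma>'" .
  have "edge_image ?\<phi> (switch_edges (s \<circ> ?\<phi>) P \<Gamma>)
      = tedges s VP [] P \<union> (\<Union>k<length \<Gamma>. tedges s (VG (\<pi> k)) [] (\<Gamma>' ! \<pi> k))"
    unfolding switch_edges_def edge_image_Un edge_image_UN using P \<Gamma> by simp
  also have "\<dots> = switch_edges s P \<Gamma>'"
    using UN_permutes[OF \<pi>(1), where F = "\<lambda>j. tedges s (VG j) [] (\<Gamma>' ! j)"]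
    by (simp add: switch_edges_def length lessThan_def)
  finally show "edge_image ?\<phi> (switch_edges (s \<circ> ?\<phi>) P \<Gamma>) = switch_edges s P \<Gamma>'" .
qed

lemma correct_mset_cong:
  assumes correct: "correct P \<Gamma>" and mset: "mset \<Gamma>' = mset \<Gamma>"
  shows "correct P \<Gamma>'"
proof (rule correct_if_switchings_contract[OF correct])
  show "pre_proof_graph P \<Gamma>'"
    using correct mset pre_proof_graph_mset_cong unfolding correct_def by blast
  obtain \<pi> where \<pi>: "\<pi> permutes {..<length \<Gamma>'}" "permute_list \<pi> \<Gamma>' = \<Gamma>"
    using mset_eq_permutation[OF mset[symmetric]] by blast
  have "inj (reindex_vertex \<pi>)"
    using permutes_inj[OF \<pi>(1)] unfolding inj_def reindex_vertex_def by (auto split: vtx.splits dest: injD)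
  then have "connected_fibres (reindex_vertex \<pi>) (graph_verts P \<Gamma>) E" for E
    by (simp add: connected_fibres_inj inj_on_subset)
  with reindex_switching_graph[OF \<pi>]
  show "\<exists>s' \<phi>. connected_fibres \<phi> (graph_verts P \<Gamma>) (switch_edges s' P \<Gamma>)
      \<and> \<phi> ` graph_verts P \<Gamma> = graph_verts P \<Gamma>' \<and> edge_image \<phi> (switch_edges s' P \<Gamma>) = switch_edges s P \<Gamma>'"
    for s
    by blast
qed

lemma pre_proof_graph_leaf_ids:
  assumes "pre_proof_graph (plug C X) (\<Delta> @ [Z])"
  shows "distinct (map fst (leaves X))"
    and "fst ` set (leaves X) \<inter> fst ` set (leaves_before C @ leaves_after C) = {}"
    and "fst ` set (leaves Z) \<inter> fst ` set (concat (map leaves \<Delta>)) = {}"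
proof -
  have distinct: "distinct (map fst (leaves_before C @ leaves X @ leaves_after C))"
    and "mset (leaves_before C @ leaves X @ leaves_after C) = mset (concat (map leaves \<Delta>) @ leaves Z)"
    using assms unfolding pre_proof_graph_def by (simp_all add: leaves_plug)
  then have "distinct (map fst (concat (map leaves \<Delta>) @ leaves Z))"
    by (metis mset_eq_imp_distinct_iff mset_map)
  with distinct show "distinct (map fst (leaves X))"
    "fst ` set (leaves X) \<inter> fst ` set (leaves_before C @ leaves_after C) = {}"
    "fst ` set (leaves Z) \<inter> fst ` set (concat (map leaves \<Delta>)) = {}"
    by auto
qed

lemma pre_proof_graph_cut_elim:
  assumes ppg: "pre_proof_graph (plug C X) (\<Delta> @ [Z])" and "cutfree X'"
    and leaves: "mset (leaves X) = mset (leaves X') + mset (leaves Z)"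
  shows "pre_proof_graph (plug C X') \<Delta>"
proof -
  have "cutfree (plug C X')"
    using ppg \<open>cutfree X'\<close> by (simp add: pre_proof_graph_def cutfree_plug)
  moreover have "mset (leaves (plug C X)) = mset (leaves (plug C X')) + mset (leaves Z)"
    using leaves by (simp add: leaves_plug)
  then have "mset (leaves (plug C X')) = mset (concat (map leaves \<Delta>))"
    using ppg by (simp add: pre_proof_graph_def)
  moreover have "distinct (map fst (leaves (plug C X')))"
  proof -
    have "mset (map fst (leaves (plug C X))) = mset (map fst (leaves (plug C X') @ leaves Z))"
      using \<open>mset (leaves (plug C X)) = _\<close> by (metis mset_append mset_map)
    then have "distinct (map fst (leaves (plug C X') @ leaves Z))"
      using ppg unfolding pre_proof_graph_def by (metis mset_eq_imp_distinct_iff)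
    then show ?thesis
      by simp
  qed
  ultimately show ?thesis
    using ppg unfolding pre_proof_graph_def by simp
qed

section \<open>The atomic step\<close>

locale atom_redex =
  fixes C :: "'a ctx" and h i j k :: nat and a :: 'a and \<Delta> :: "'a ftree list"
  assumes correct_redex: "correct
    (plug C (Node Par (Node Tens (Leaf h (Neg a)) (Leaf i (Pos a))) (Node Tens (Leaf j (Neg a)) (Leaf k (Pos a)))))
    (\<Delta> @ [Node CutC (Leaf i (Pos a)) (Leaf j (Neg a))])"
begin

abbreviation "redex \<equiv>
  plug C (Node Par (Node Tens (Leaf h (Neg a)) (Leaf i (Pos a))) (Node Tens (Leaf j (Neg a)) (Leaf k (Pos a))))"
abbreviation "reduct \<equiv> plug C (Node Tens (Leaf h (Neg a)) (Leaf k (Pos a)))"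
abbreviation "redex_seq \<equiv> \<Delta> @ [Node CutC (Leaf i (Pos a)) (Leaf j (Neg a))]"
abbreviation "hole \<equiv> hole_pos C"
abbreviation "cut_node \<equiv> VG (length \<Delta>) []"

text \<open>The left tensor becomes the tensor of the reduct; the right tensor, the cut and the leaves
  \<open>i\<close>, \<open>j\<close> are collapsed onto the leaf \<open>k\<close>.\<close>

definition merge :: "vtx \<Rightarrow> vtx" where
  "merge v = (if v = VP (hole @ [False]) then VP hole
    else if v \<in> {VP (hole @ [True]), VL i, VL j, cut_node} then VL k else v)"

lemma pre_proof_graph_redex: "pre_proof_graph redex redex_seq"
  using correct_redex by (simp add: correct_def)

lemma fresh:
  shows "distinct [h, i, j, k]"
    and "(i, l) \<notin> set (leaves_before C @ leaves_after C)" "(j, l) \<notin> set (leaves_before C @ leaves_after C)"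
    and "(i, l) \<notin> set (concat (map leaves \<Delta>))" "(j, l) \<notin> set (concat (map leaves \<Delta>))"
proof -
  have "distinct [h, i, j, k]" "{h, i, j, k} \<inter> fst ` set (leaves_before C @ leaves_after C) = {}"
    "{i, j} \<inter> fst ` set (concat (map leaves \<Delta>)) = {}"
    using pre_proof_graph_leaf_ids[OF pre_proof_graph_redex] by simp_all
  then show "distinct [h, i, j, k]"
    and "(i, l) \<notin> set (leaves_before C @ leaves_after C)" "(j, l) \<notin> set (leaves_before C @ leaves_after C)"
    and "(i, l) \<notin> set (concat (map leaves \<Delta>))" "(j, l) \<notin> set (concat (map leaves \<Delta>))"
    by (auto simp del: set_append set_concat intro: rev_image_eqI)
qed

lemma pre_proof_graph_reduct: "pre_proof_graph reduct \<Delta>"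
  by (rule pre_proof_graph_cut_elim[OF pre_proof_graph_redex]) auto

lemma merge_ctx_verts: "v \<in> ctx_verts VP [] C \<Longrightarrow> merge v = v"
  using ctx_verts_memD[of v VP "[]" C] fresh(2,3) by (auto simp: merge_def)

lemma merge_seq_verts: "v \<in> seq_verts \<Delta> \<Longrightarrow> merge v = v"
  using seq_verts_memD[of v \<Delta>] fresh(4,5) by (auto simp: merge_def)

lemma redex_verts:
  "graph_verts redex redex_seq = ctx_verts VP [] C \<union> seq_verts \<Delta> \<union>
    {VP hole, VP (hole @ [False]), VP (hole @ [True]), VL h, VL i, VL j, VL k, cut_node}"
  by (auto simp: graph_verts_eq seq_verts_snoc tverts_plug)

lemma redex_edges:
  "switch_edges (s(VP hole := False)) redex redex_seq = ctx_edges s VP [] C (VP hole) \<union> seq_edges s \<Delta> \<union>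
    {{VP hole, VP (hole @ [False])}, {VP (hole @ [False]), VL h}, {VP (hole @ [False]), VL i},
     {VP (hole @ [True]), VL j}, {VP (hole @ [True]), VL k}, {cut_node, VL i}, {cut_node, VL j}}"
proof -
  have "ctx_edges (s(VP hole := False)) VP [] C (VP hole) = ctx_edges s VP [] C (VP hole)"
    using hole_node_notin_ctx_verts[OF node_embedding_VP, of "[]" C] by (intro ctx_edges_cong) auto
  moreover have "seq_edges (s(VP hole := False)) \<Delta> = seq_edges s \<Delta>"
    using seq_verts_memD by (intro seq_edges_cong) fastforce
  ultimately show ?thesis
    by (auto simp: switch_edges_eq seq_edges_snoc tedges_plug Let_def)
qed

lemma reduct_verts:
  "graph_verts reduct \<Delta> = ctx_verts VP [] C \<union> seq_verts \<Delta> \<union> {VP hole, VL h, VL k}"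
  by (auto simp: graph_verts_eq tverts_plug)

lemma reduct_edges:
  "switch_edges s reduct \<Delta> = ctx_edges s VP [] C (VP hole) \<union> seq_edges s \<Delta> \<union> {{VP hole, VL h}, {VP hole, VL k}}"
  by (auto simp: switch_edges_eq tedges_plug Let_def)

lemma merge_verts: "merge ` graph_verts redex redex_seq = graph_verts reduct \<Delta>"
proof -
  have "merge ` ctx_verts VP [] C = ctx_verts VP [] C" "merge ` seq_verts \<Delta> = seq_verts \<Delta>"
    using merge_ctx_verts merge_seq_verts by force+
  moreover have "merge ` {VP hole, VP (hole @ [False]), VP (hole @ [True]), VL h, VL i, VL j, VL k, cut_node}
      = {VP hole, VL h, VL k}"
    using fresh(1) by (auto simp: merge_def)
  ultimately show ?thesis
    unfolding redex_verts reduct_verts image_Un by simp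
qed

lemma merge_edges:
  "edge_image merge (switch_edges (s(VP hole := False)) redex redex_seq) = switch_edges s reduct \<Delta>"
proof -
  have "edge_image merge (ctx_edges s VP [] C (VP hole)) = ctx_edges s VP [] C (merge (VP hole))"
    using hole_node_notin_ctx_verts[OF node_embedding_VP, of "[]" C] merge_ctx_verts
    by (intro ctx_edges_image[OF node_embedding_VP]) (auto simp: merge_def)
  then have "edge_image merge (ctx_edges s VP [] C (VP hole)) = ctx_edges s VP [] C (VP hole)"
    by (simp add: merge_def)
  moreover have "edge_image merge (seq_edges s \<Delta>) = seq_edges s \<Delta>"
    using merge_seq_verts by (simp add: edge_image_seq_edges_id)
  ultimately show ?thesis
    unfolding redex_edges reduct_edges edge_image_Un using fresh(1)
    by (simp add: edge_image_insert merge_def insert_commute)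
qed

abbreviation "merged_nodes \<equiv> {VP hole, VP (hole @ [False]), VP (hole @ [True]), VL i, VL j, cut_node, VL k}"

lemma merge_outside: "v \<in> graph_verts redex redex_seq - merged_nodes \<Longrightarrow> merge v = v"
  using merge_ctx_verts merge_seq_verts unfolding redex_verts by (auto simp: merge_def)

lemma linked_merged_nodes:
  assumes "u \<in> merged_nodes" "v \<in> merged_nodes" "merge u = merge v"
  shows "linked (collapsed merge (switch_edges (s(VP hole := False)) redex redex_seq)) u v"
proof -
  let ?E = "collapsed merge (switch_edges (s(VP hole := False)) redex redex_seq)"
  have edge: "linked ?E x y" if "{x, y} \<in> switch_edges (s(VP hole := False)) redex redex_seq"
    "merge x = merge y" for x y
    using that by (intro linked_edge) (auto simp: collapsed_def)
  have "linked ?E (VP hole) (VP (hole @ [False]))" "linked ?E (VP (hole @ [True])) (VL k)"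
      "linked ?E (VP (hole @ [True])) (VL j)" "linked ?E cut_node (VL j)" "linked ?E cut_node (VL i)"
    using fresh(1) by (intro edge; simp add: redex_edges merge_def)+
  then have "linked ?E (VP hole) (VP (hole @ [False]))" "linked ?E (VL k) (VP (hole @ [True]))"
      "linked ?E (VL k) (VL j)" "linked ?E (VL k) cut_node" "linked ?E (VL k) (VL i)"
    by (meson linked_sym rtrancl_trans)+
  then have to_image: "linked ?E (merge x) x" if "x \<in> merged_nodes" for x
    using that fresh(1) by (auto simp: merge_def)
  have "linked ?E u (merge v)"
    using linked_sym[OF to_image[OF assms(1)]] assms(3) by simp
  then show ?thesis
    using to_image[OF assms(2)] by (rule rtrancl_trans)
qed

lemma merge_connected_fibres:
  "connected_fibres merge (graph_verts redex redex_seq) (switch_edges (s(VP hole := False)) redex redex_seq)"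
proof (rule connected_fibres_local[OF _ _ linked_merged_nodes])
  show "inj_on merge (graph_verts redex redex_seq - merged_nodes)"
    using merge_outside by (simp add: inj_on_def)
  show "merge u \<noteq> merge v" if "u \<in> merged_nodes" "v \<in> graph_verts redex redex_seq - merged_nodes" for u v
    using merge_outside[OF that(2)] that fresh(1) by (auto simp: merge_def)
qed

theorem correct_reduct: "correct reduct \<Delta>"
proof (rule correct_if_switchings_contract[OF correct_redex pre_proof_graph_reduct])
  fix s
  show "\<exists>s' \<phi>. connected_fibres \<phi> (graph_verts redex redex_seq) (switch_edges s' redex redex_seq)
      \<and> \<phi> ` graph_verts redex redex_seq = graph_verts reduct \<Delta>
      \<and> edge_image \<phi> (switch_edges s' redex redex_seq) = switch_edges s reduct \<Delta>"
    using merge_connected_fibres merge_verts merge_edges by blast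
qed

end

section \<open>The unit step\<close>

locale unit_redex =
  fixes C :: "'a ctx" and Q :: "'a ftree" and i j :: nat and \<Delta> :: "'a ftree list"
  assumes correct_redex: "correct (plug C (Node Par (Node Tens Q (Leaf i Bot)) (Leaf j One)))
    (\<Delta> @ [Node CutC (Leaf i Bot) (Leaf j One)])"
begin

abbreviation "redex \<equiv> plug C (Node Par (Node Tens Q (Leaf i Bot)) (Leaf j One))"
abbreviation "reduct \<equiv> plug C Q"
abbreviation "redex_seq \<equiv> \<Delta> @ [Node CutC (Leaf i Bot) (Leaf j One)]"
abbreviation "hole \<equiv> hole_pos C"
abbreviation "cut_node \<equiv> VG (length \<Delta>) []"
abbreviation "tensor_node \<equiv> VP (hole @ [False])"
abbreviation "old_root \<equiv> troot VP (hole @ [False, False]) Q"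
abbreviation "new_root \<equiv> troot VP hole Q"

text \<open>The par, the tensor, the cut and its two leaves are collapsed onto the root of \<open>Q\<close>, whose
  subtree moves up from position \<open>hole @ [False, False]\<close> to \<open>hole\<close>.\<close>

definition shift :: "vtx \<Rightarrow> vtx" where
  "shift v = (if v \<in> {VP hole, tensor_node, VL i, VL j, cut_node} then new_root
    else case v of VP r \<Rightarrow> VP (if prefix (hole @ [False, False]) r then hole @ drop (length hole + 2) r else r)
      | _ \<Rightarrow> v)"

definition lift_switching :: "(vtx \<Rightarrow> bool) \<Rightarrow> vtx \<Rightarrow> bool" where
  "lift_switching s v = (if v = VP hole then False else s (shift v))"

lemma pre_proof_graph_redex: "pre_proof_graph redex redex_seq"
  using correct_redex by (simp add: correct_def)

lemma fresh:
  shows "i \<noteq> j" and "i \<notin> fst ` set (leaves Q)" "j \<notin> fst ` set (leaves Q)"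
    and "fst ` set (leaves Q) \<inter> fst ` set (leaves_before C @ leaves_after C) = {}"
    and "(i, l) \<notin> set (leaves_before C @ leaves_after C)" "(j, l) \<notin> set (leaves_before C @ leaves_after C)"
    and "(i, l) \<notin> set (concat (map leaves \<Delta>))" "(j, l) \<notin> set (concat (map leaves \<Delta>))"
proof -
  have "distinct (map fst (leaves Q) @ [i, j])"
    "(fst ` set (leaves Q) \<union> {i, j}) \<inter> fst ` set (leaves_before C @ leaves_after C) = {}"
    "{i, j} \<inter> fst ` set (concat (map leaves \<Delta>)) = {}"
    using pre_proof_graph_leaf_ids[OF pre_proof_graph_redex] by (simp_all add: Un_commute)
  then show "i \<noteq> j" "i \<notin> fst ` set (leaves Q)" "j \<notin> fst ` set (leaves Q)"
    "fst ` set (leaves Q) \<inter> fst ` set (leaves_before C @ leaves_after C) = {}"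
    "(i, l) \<notin> set (leaves_before C @ leaves_after C)" "(j, l) \<notin> set (leaves_before C @ leaves_after C)"
    "(i, l) \<notin> set (concat (map leaves \<Delta>))" "(j, l) \<notin> set (concat (map leaves \<Delta>))"
    by (auto simp del: set_append set_concat intro: rev_image_eqI)
qed

lemma pre_proof_graph_reduct: "pre_proof_graph reduct \<Delta>"
proof (rule pre_proof_graph_cut_elim[OF pre_proof_graph_redex])
  show "cutfree Q"
    using pre_proof_graph_redex by (simp add: pre_proof_graph_def cutfree_plug)
qed simp

lemma new_root_notin_ctx_verts: "new_root \<notin> ctx_verts VP [] C"
proof (cases Q)
  case (Leaf l y)
  then show ?thesis
    using ctx_verts_memD[of "VL l" VP "[]" C] fresh(4) by force
next
  case (Node c A B)
  then show ?thesis
    using hole_node_notin_ctx_verts[OF node_embedding_VP, of "[]" C] by simp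
qed

lemma shift_ctx_verts:
  assumes "v \<in> ctx_verts VP [] C"
  shows "shift v = v \<and> (\<forall>r. v \<noteq> VP (hole @ r))"
proof -
  consider r where "v = VP r" "\<not> prefix hole r" | i' l where "v = VL i'" "(i', l) \<in> set (leaves_before C @ leaves_after C)"
    using ctx_verts_memD[OF assms] by fastforce
  then show ?thesis
  proof cases
    case 1
    then have "\<not> prefix (hole @ [False, False]) r" "r \<noteq> hole" "r \<noteq> hole @ [False]"
      by (auto dest: append_prefixD)
    with 1 show ?thesis
      by (auto simp: shift_def)
  next
    case 2
    with fresh(5,6) show ?thesis
      by (auto simp: shift_def)
  qed
qed

lemma shift_seq_verts: "v \<in> seq_verts \<Delta> \<Longrightarrow> shift v = v \<and> (\<forall>r. v \<noteq> VP (hole @ r))"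
  using seq_verts_memD[of v \<Delta>] fresh(7,8) by (auto simp: shift_def)

lemma shift_subtree: "shift (VP (hole @ False # False # r)) = VP (hole @ r)"
  by (simp add: shift_def)

lemma shift_subtree_leaf: "(l, y) \<in> set (leaves Q) \<Longrightarrow> shift (VL l) = VL l"
  using fresh(2,3) by (force simp: shift_def)

lemma relabel_subtree:
  "shift ` tverts VP (hole @ [False, False]) Q = tverts VP hole Q
    \<and> edge_image shift (tedges (lift_switching s) VP (hole @ [False, False]) Q) = tedges s VP hole Q
    \<and> shift old_root = new_root"
  using shift_subtree_leaf by (intro tverts_tedges_relabel) (auto simp: shift_subtree lift_switching_def node_embedding_VP)

lemma shift_redex_nodes:
  "shift (VP hole) = new_root" "shift tensor_node = new_root" "shift (VL i) = new_root"
  "shift (VL j) = new_root" "shift cut_node = new_root" "shift old_root = new_root"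
  using relabel_subtree by (simp_all add: shift_def)

lemma redex_verts:
  "graph_verts redex redex_seq = ctx_verts VP [] C \<union> seq_verts \<Delta> \<union> tverts VP (hole @ [False, False]) Q
    \<union> {VP hole, tensor_node, VL i, VL j, cut_node}"
  by (auto simp: graph_verts_eq seq_verts_snoc tverts_plug)

lemma redex_edges:
  "switch_edges (lift_switching s) redex redex_seq = ctx_edges s VP [] C (VP hole) \<union> seq_edges s \<Delta>
    \<union> tedges (lift_switching s) VP (hole @ [False, False]) Q
    \<union> {{VP hole, tensor_node}, {tensor_node, old_root}, {tensor_node, VL i}, {cut_node, VL i}, {cut_node, VL j}}"
proof -
  have "ctx_edges (lift_switching s) VP [] C (VP hole) = ctx_edges s VP [] C (VP hole)"
    using shift_ctx_verts by (intro ctx_edges_cong) (auto simp: lift_switching_def)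
  moreover have "seq_edges (lift_switching s) \<Delta> = seq_edges s \<Delta>"
    using shift_seq_verts by (intro seq_edges_cong) (auto simp: lift_switching_def)
  moreover have "lift_switching s (VP hole) = False"
    by (simp add: lift_switching_def)
  ultimately show ?thesis
    by (auto simp: switch_edges_eq seq_edges_snoc tedges_plug Let_def)
qed

lemma reduct_verts: "graph_verts reduct \<Delta> = ctx_verts VP [] C \<union> seq_verts \<Delta> \<union> tverts VP hole Q"
  by (auto simp: graph_verts_eq tverts_plug)

lemma reduct_edges:
  "switch_edges s reduct \<Delta> = ctx_edges s VP [] C new_root \<union> seq_edges s \<Delta> \<union> tedges s VP hole Q"
  by (auto simp: switch_edges_eq tedges_plug)

lemma shift_verts: "shift ` graph_verts redex redex_seq = graph_verts reduct \<Delta>"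
proof -
  have "shift ` ctx_verts VP [] C = ctx_verts VP [] C" "shift ` seq_verts \<Delta> = seq_verts \<Delta>"
    using shift_ctx_verts shift_seq_verts by force+
  moreover have "shift ` {VP hole, tensor_node, VL i, VL j, cut_node} = {new_root}"
    by (simp add: shift_redex_nodes)
  moreover have "new_root \<in> tverts VP hole Q"
    by (rule troot_in_tverts)
  ultimately show ?thesis
    unfolding redex_verts reduct_verts image_Un using relabel_subtree by auto
qed

lemma shift_edges:
  "edge_image shift (switch_edges (lift_switching s) redex redex_seq) = switch_edges s reduct \<Delta>"
proof -
  have "edge_image shift (ctx_edges s VP [] C (VP hole)) = ctx_edges s VP [] C new_root"
    using new_root_notin_ctx_verts shift_ctx_verts shift_redex_nodes(1)
    by (metis ctx_edges_image[OF node_embedding_VP])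
  moreover have "edge_image shift (seq_edges s \<Delta>) = seq_edges s \<Delta>"
    using shift_seq_verts by (simp add: edge_image_seq_edges_id)
  moreover have "edge_image shift
      {{VP hole, tensor_node}, {tensor_node, old_root}, {tensor_node, VL i}, {cut_node, VL i}, {cut_node, VL j}} = {}"
    by (simp add: edge_image_insert shift_redex_nodes)
  ultimately show ?thesis
    unfolding redex_edges reduct_edges edge_image_Un using relabel_subtree by simp
qed

abbreviation "collapsed_nodes \<equiv> {VP hole, tensor_node, VL i, VL j, cut_node, old_root}"

lemma shift_outside_cases:
  assumes "v \<in> graph_verts redex redex_seq - collapsed_nodes"
  shows "(\<exists>r. v = VP (hole @ False # False # r)) \<or> (shift v = v \<and> (\<forall>r. v \<noteq> VP (hole @ r)))"
proof -
  have "v \<in> ctx_verts VP [] C \<or> v \<in> seq_verts \<Delta> \<or> v \<in> tverts VP (hole @ [False, False]) Q"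
    using assms unfolding redex_verts by blast
  then show ?thesis
    using shift_ctx_verts shift_seq_verts tverts_memD[of v VP "hole @ [False, False]" Q] shift_subtree_leaf
    by fastforce
qed

lemma inj_on_shift: "inj_on shift (graph_verts redex redex_seq - collapsed_nodes)"
proof (rule inj_onI)
  fix v w
  assume "v \<in> graph_verts redex redex_seq - collapsed_nodes" "w \<in> graph_verts redex redex_seq - collapsed_nodes"
    and "shift v = shift w"
  with shift_outside_cases[of v] shift_outside_cases[of w] show "v = w"
    by (auto simp: shift_subtree)
qed

lemma shift_neq_new_root:
  assumes v: "v \<in> graph_verts redex redex_seq - collapsed_nodes"
  shows "shift v \<noteq> new_root"
proof
  assume "shift v = new_root"
  have roots: "new_root = VP hole \<and> old_root = VP (hole @ [False, False]) \<or> (\<exists>l. new_root = VL l \<and> old_root = VL l)"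
    by (cases Q) auto
  from shift_outside_cases[OF v] show False
  proof
    assume "\<exists>r. v = VP (hole @ False # False # r)"
    then obtain r where "v = VP (hole @ False # False # r)"
      by blast
    with \<open>shift v = new_root\<close> roots v show False
      by (auto simp: shift_subtree)
  next
    assume "shift v = v \<and> (\<forall>r. v \<noteq> VP (hole @ r))"
    with \<open>shift v = new_root\<close> roots v show False
      by (metis DiffD2 append_Nil2 insertCI)
  qed
qed

lemma linked_collapsed_nodes:
  assumes "u \<in> collapsed_nodes" "v \<in> collapsed_nodes"
  shows "linked (collapsed shift (switch_edges (lift_switching s) redex redex_seq)) u v"
proof -
  let ?E = "collapsed shift (switch_edges (lift_switching s) redex redex_seq)"
  have edge: "linked ?E x y" if "{x, y} \<in> switch_edges (lift_switching s) redex redex_seq"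
    "x \<in> collapsed_nodes" "y \<in> collapsed_nodes" for x y
    using that shift_redex_nodes by (intro linked_edge) (auto simp: collapsed_def)
  have "linked ?E (VP hole) tensor_node" "linked ?E tensor_node old_root" "linked ?E tensor_node (VL i)"
      "linked ?E cut_node (VL i)" "linked ?E cut_node (VL j)"
    by (intro edge; simp add: redex_edges)+
  then have "linked ?E tensor_node (VP hole)" "linked ?E tensor_node old_root" "linked ?E tensor_node (VL i)"
      "linked ?E tensor_node cut_node" "linked ?E tensor_node (VL j)"
    by (meson linked_sym rtrancl_trans)+
  then have from_tensor: "linked ?E tensor_node x" if "x \<in> collapsed_nodes" for x
    using that by auto
  show ?thesis
    using linked_sym[OF from_tensor[OF assms(1)]] from_tensor[OF assms(2)] by (rule rtrancl_trans)
qed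

lemma shift_connected_fibres:
  "connected_fibres shift (graph_verts redex redex_seq) (switch_edges (lift_switching s) redex redex_seq)"
proof (rule connected_fibres_local[OF inj_on_shift])
  show "shift u \<noteq> shift v" if "u \<in> collapsed_nodes" "v \<in> graph_verts redex redex_seq - collapsed_nodes" for u v
    using that(1) shift_redex_nodes shift_neq_new_root[OF that(2)] by auto
qed (rule linked_collapsed_nodes)

theorem correct_reduct: "correct reduct \<Delta>"
proof (rule correct_if_switchings_contract[OF correct_redex pre_proof_graph_reduct])
  fix s
  show "\<exists>s' \<phi>. connected_fibres \<phi> (graph_verts redex redex_seq) (switch_edges s' redex redex_seq)
      \<and> \<phi> ` graph_verts redex redex_seq = graph_verts reduct \<Delta>
      \<and> edge_image \<phi> (switch_edges s' redex redex_seq) = switch_edges s reduct \<Delta>"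
    using shift_connected_fibres shift_verts shift_edges by blast
qed

end

section \<open>The multiplicative step\<close>

locale mult_redex =
  fixes P A B B' A' :: "'a ftree" and \<Delta> :: "'a ftree list"
  assumes correct_redex: "correct P (\<Delta> @ [Node CutC (Node Par A B) (Node Tens B' A')])"
begin

abbreviation "redex_seq \<equiv> \<Delta> @ [Node CutC (Node Par A B) (Node Tens B' A')]"
abbreviation "reduct_seq \<equiv> \<Delta> @ [Node CutC A A', Node CutC B B']"
abbreviation "cut_node \<equiv> VG (length \<Delta>) []"
abbreviation "par_node \<equiv> VG (length \<Delta>) [False]"
abbreviation "tensor_node \<equiv> VG (length \<Delta>) [True]"
abbreviation "root_A \<equiv> troot (VG (length \<Delta>)) [False, False] A"
abbreviation "root_B \<equiv> troot (VG (length \<Delta>)) [False, True] B"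
abbreviation "root_B' \<equiv> troot (VG (length \<Delta>)) [True, False] B'"
abbreviation "root_A' \<equiv> troot (VG (length \<Delta>)) [True, True] A'"

abbreviation "old_verts \<equiv> graph_verts P \<Delta> \<union> tverts (VG (length \<Delta>)) [False, False] A
  \<union> tverts (VG (length \<Delta>)) [False, True] B \<union> tverts (VG (length \<Delta>)) [True, False] B'
  \<union> tverts (VG (length \<Delta>)) [True, True] A'"

abbreviation "old_edges s \<equiv> switch_edges s P \<Delta> \<union> tedges s (VG (length \<Delta>)) [False, False] A
  \<union> tedges s (VG (length \<Delta>)) [False, True] B \<union> tedges s (VG (length \<Delta>)) [True, False] B'
  \<union> tedges s (VG (length \<Delta>)) [True, True] A'"

abbreviation "preimage_verts \<equiv> old_verts \<union> {cut_node, par_node, tensor_node}"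

abbreviation "preimage_edges s \<equiv> old_edges s \<union>
  {{cut_node, root_A}, {cut_node, tensor_node}, {tensor_node, root_A'}, {par_node, root_B}, {par_node, root_B'}}"

text \<open>The cut \<open>A \<odot> A'\<close> of the reduct is the old cut merged with the old tensor, the cut
  \<open>B \<odot> B'\<close> is the old par; each of the four subtrees moves up one level on its side.\<close>

fun cut_split_pos :: "bool list \<Rightarrow> vtx" where
  "cut_split_pos [] = VG (length \<Delta>) []"
| "cut_split_pos [b] = (if b then VG (length \<Delta>) [] else VG (Suc (length \<Delta>)) [])"
| "cut_split_pos (b1 # b2 # r) = (if b1 = b2 then VG (length \<Delta>) (b1 # r) else VG (Suc (length \<Delta>)) (b1 # r))"

definition cut_split :: "vtx \<Rightarrow> vtx" where
  "cut_split v = (case v of VG m r \<Rightarrow> if m = length \<Delta> then cut_split_pos r else v | _ \<Rightarrow> v)"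

lemma cut_split_pos_cases: "\<exists>r'. cut_split_pos r = VG (length \<Delta>) r' \<or> cut_split_pos r = VG (Suc (length \<Delta>)) r'"
  by (cases r rule: cut_split_pos.cases) auto

lemma cut_split_pos_inj: "cut_split_pos r = cut_split_pos r' \<Longrightarrow> r = r' \<or> r \<in> {[], [True]} \<and> r' \<in> {[], [True]}"
  by (cases r rule: cut_split_pos.cases; cases r' rule: cut_split_pos.cases) (auto split: if_splits)

lemma pre_proof_graph_redex: "pre_proof_graph P redex_seq"
  using correct_redex by (simp add: correct_def)

lemma pre_proof_graph_reduct: "pre_proof_graph P reduct_seq"
  using pre_proof_graph_redex unfolding pre_proof_graph_def by auto

lemma subtree_leaf_ids:
  "fst ` set (leaves B') \<inter> fst ` set (leaves A') = {}"
proof -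
  have "distinct (map fst (concat (map leaves redex_seq)))"
    using pre_proof_graph_redex unfolding pre_proof_graph_def by (metis mset_eq_imp_distinct_iff mset_map)
  then show ?thesis
    by auto
qed

lemma graph_verts_base:
  "v \<in> graph_verts P \<Delta> \<Longrightarrow> cut_split v = v \<and> (\<forall>r. v \<noteq> VG (length \<Delta>) r \<and> v \<noteq> VG (Suc (length \<Delta>)) r)"
  using tverts_memD[of v VP "[]" P] seq_verts_memD[of v \<Delta>] unfolding graph_verts_eq
  by (auto simp: cut_split_def)

lemma subtree_verts_cases:
  "v \<in> tverts (VG (length \<Delta>)) [b1, b2] T \<Longrightarrow> (\<exists>r. v = VG (length \<Delta>) (b1 # b2 # r)) \<or> (\<exists>l. v = VL l)"
  using tverts_memD[of v "VG (length \<Delta>)" "[b1, b2]" T] by auto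

lemma old_verts_cases:
  "v \<in> preimage_verts \<Longrightarrow>
    (\<exists>r. v = VG (length \<Delta>) r) \<or> (cut_split v = v \<and> (\<forall>r. v \<noteq> VG (length \<Delta>) r \<and> v \<noteq> VG (Suc (length \<Delta>)) r))"
proof -
  assume "v \<in> preimage_verts"
  then consider "v \<in> graph_verts P \<Delta>" | "\<exists>b1 b2 T. v \<in> tverts (VG (length \<Delta>)) [b1, b2] (T :: 'a ftree)"
    | "\<exists>r. v = VG (length \<Delta>) r"
    by blast
  then show ?thesis
  proof cases
    case 1
    then show ?thesis using graph_verts_base by blast
  next
    case 2
    then obtain b1 b2 and T :: "'a ftree" where "v \<in> tverts (VG (length \<Delta>)) [b1, b2] T"
      by blast
    from subtree_verts_cases[OF this] show ?thesis
      by (auto simp: cut_split_def)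
  qed blast
qed

lemma old_verts_fresh: "cut_node \<notin> old_verts" "par_node \<notin> old_verts" "tensor_node \<notin> old_verts"
  using graph_verts_base subtree_verts_cases by blast+

lemma roots_in_old_verts: "root_A \<in> old_verts" "root_B \<in> old_verts" "root_A' \<in> old_verts" "root_B' \<in> old_verts"
  using troot_in_tverts by blast+

lemma roots_distinct: "root_A' \<noteq> root_B'"
  using subtree_leaf_ids by (cases B'; cases A') (auto simp: disjoint_iff)

lemma redex_verts: "graph_verts P redex_seq = preimage_verts"
  by (auto simp: graph_verts_eq seq_verts_snoc)

lemma switch_edges_update_par: "switch_edges (s(par_node := b)) P \<Delta> = switch_edges s P \<Delta>"
  using graph_verts_base by (intro switch_edges_cong) auto

lemma tedges_update_par: "tedges (s(par_node := b)) (VG (length \<Delta>)) [b1, b2] T = tedges s (VG (length \<Delta>)) [b1, b2] T"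
  using subtree_verts_cases by (intro tedges_cong) auto

lemma redex_edges:
  "switch_edges (s(par_node := b)) P redex_seq = old_edges s \<union>
    {{par_node, if b then root_B else root_A}, {cut_node, par_node}, {cut_node, tensor_node},
     {tensor_node, root_A'}, {tensor_node, root_B'}}"
proof -
  have "switch_edges (s(par_node := b)) P redex_seq
      = switch_edges (s(par_node := b)) P \<Delta> \<union> tedges (s(par_node := b)) (VG (length \<Delta>)) [] (Node CutC (Node Par A B) (Node Tens B' A'))"
    by (simp add: switch_edges_eq seq_edges_snoc Un_assoc)
  then show ?thesis
    by (simp add: switch_edges_update_par tedges_update_par Let_def Un_ac insert_commute)
qed

lemma edges_within_old_edges: "edges_within old_verts (old_edges s)"
  by (intro edges_within_Un edges_within_mono[OF edges_within_switch_edges]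
      edges_within_mono[OF edges_within_tedges]; blast)

lemma ug_tree_preimage: "ug_tree preimage_verts (preimage_edges s)"
proof (rule ug_tree_mult_reduct[OF edges_within_old_edges old_verts_fresh _ _ _ roots_in_old_verts roots_distinct])
  have "ug_tree (graph_verts P redex_seq) (switch_edges (s(par_node := b)) P redex_seq)" for b
    using correct_redex by (simp add: correct_iff_ug_tree)
  from this[of False] this[of True]
  show "ug_tree preimage_verts (old_edges s \<union> {{par_node, root_A}, {cut_node, par_node}, {cut_node, tensor_node},
      {tensor_node, root_A'}, {tensor_node, root_B'}})"
    "ug_tree preimage_verts (old_edges s \<union> {{par_node, root_B}, {cut_node, par_node}, {cut_node, tensor_node},
      {tensor_node, root_A'}, {tensor_node, root_B'}})"
    by (simp_all only: redex_verts redex_edges if_False if_True)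
qed simp_all

lemma relabel_subtree:
  "cut_split ` tverts (VG (length \<Delta>)) [b1, b2] T = tverts (if b1 = b2 then VG (length \<Delta>) else VG (Suc (length \<Delta>))) [b1] T
    \<and> edge_image cut_split (tedges (s \<circ> cut_split) (VG (length \<Delta>)) [b1, b2] T)
        = tedges s (if b1 = b2 then VG (length \<Delta>) else VG (Suc (length \<Delta>))) [b1] T
    \<and> cut_split (troot (VG (length \<Delta>)) [b1, b2] T) = troot (if b1 = b2 then VG (length \<Delta>) else VG (Suc (length \<Delta>))) [b1] T"
  by (rule tverts_tedges_relabel) (auto simp: cut_split_def node_embedding_VG)

lemma reduct_verts:
  "graph_verts P reduct_seq = graph_verts P \<Delta> \<union> {VG (length \<Delta>) [], VG (Suc (length \<Delta>)) []}
    \<union> tverts (VG (length \<Delta>)) [False] A \<union> tverts (VG (length \<Delta>)) [True] A'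
    \<union> tverts (VG (Suc (length \<Delta>))) [False] B \<union> tverts (VG (Suc (length \<Delta>))) [True] B'"
  unfolding graph_verts_append2 by auto

lemma reduct_edges:
  "switch_edges s P reduct_seq = switch_edges s P \<Delta>
    \<union> {{VG (length \<Delta>) [], troot (VG (length \<Delta>)) [False] A}, {VG (length \<Delta>) [], troot (VG (length \<Delta>)) [True] A'},
       {VG (Suc (length \<Delta>)) [], troot (VG (Suc (length \<Delta>))) [False] B},
       {VG (Suc (length \<Delta>)) [], troot (VG (Suc (length \<Delta>))) [True] B'}}
    \<union> tedges s (VG (length \<Delta>)) [False] A \<union> tedges s (VG (length \<Delta>)) [True] A'
    \<union> tedges s (VG (Suc (length \<Delta>))) [False] B \<union> tedges s (VG (Suc (length \<Delta>))) [True] B'"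
  unfolding switch_edges_append2 by (simp add: Let_def Un_ac insert_commute)

lemma cut_split_verts: "cut_split ` preimage_verts = graph_verts P reduct_seq"
proof -
  have base: "cut_split ` graph_verts P \<Delta> = graph_verts P \<Delta>"
    using graph_verts_base by force
  have nodes: "cut_split ` {cut_node, par_node, tensor_node} = {VG (length \<Delta>) [], VG (Suc (length \<Delta>)) []}"
    by (auto simp: cut_split_def)
  have subtrees: "cut_split ` tverts (VG (length \<Delta>)) [False, False] A = tverts (VG (length \<Delta>)) [False] A"
    "cut_split ` tverts (VG (length \<Delta>)) [False, True] B = tverts (VG (Suc (length \<Delta>))) [False] B"
    "cut_split ` tverts (VG (length \<Delta>)) [True, False] B' = tverts (VG (Suc (length \<Delta>))) [True] B'"
    "cut_split ` tverts (VG (length \<Delta>)) [True, True] A' = tverts (VG (length \<Delta>)) [True] A'"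
    using relabel_subtree[of False False A] relabel_subtree[of False True B] relabel_subtree[of True False B']
      relabel_subtree[of True True A'] by simp_all
  show ?thesis
    unfolding reduct_verts image_Un base nodes subtrees by (simp add: Un_ac)
qed

lemma cut_split_edges: "edge_image cut_split (preimage_edges (s \<circ> cut_split)) = switch_edges s P reduct_seq"
proof -
  have "edge_image cut_split (switch_edges (s \<circ> cut_split) P \<Delta>) = switch_edges s P \<Delta>"
  proof -
    have "switch_edges (s \<circ> cut_split) P \<Delta> = switch_edges s P \<Delta>"
      using graph_verts_base by (intro switch_edges_cong) simp
    then show ?thesis
      using graph_verts_base by (simp add: edge_image_switch_edges_id)
  qed
  moreover have root_neq: "VG m [] \<noteq> troot (VG m) [b] T" "troot (VG m) [b] T \<noteq> VG m []"
    for m b and T :: "'a ftree"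
    by (cases T; simp)+
  have "edge_image cut_split {{cut_node, root_A}, {cut_node, tensor_node}, {tensor_node, root_A'},
      {par_node, root_B}, {par_node, root_B'}} =
    {{VG (length \<Delta>) [], troot (VG (length \<Delta>)) [False] A}, {VG (length \<Delta>) [], troot (VG (length \<Delta>)) [True] A'},
     {VG (Suc (length \<Delta>)) [], troot (VG (Suc (length \<Delta>))) [False] B},
     {VG (Suc (length \<Delta>)) [], troot (VG (Suc (length \<Delta>))) [True] B'}}"
    using relabel_subtree[of False False A] relabel_subtree[of False True B] relabel_subtree[of True False B']
      relabel_subtree[of True True A']
    by (simp add: edge_image_insert cut_split_def root_neq insert_commute)
  ultimately show ?thesis
    unfolding reduct_edges edge_image_Un
    using relabel_subtree[of False False A s] relabel_subtree[of False True B s]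
      relabel_subtree[of True False B' s] relabel_subtree[of True True A' s]
    by (simp add: Un_ac)
qed

lemma inj_on_cut_split: "inj_on cut_split (preimage_verts - {cut_node, tensor_node})"
proof (rule inj_onI)
  fix v w
  assume v: "v \<in> preimage_verts - {cut_node, tensor_node}" and w: "w \<in> preimage_verts - {cut_node, tensor_node}"
    and eq: "cut_split v = cut_split w"
  have image: "cut_split (VG (length \<Delta>) r) = cut_split_pos r" for r
    by (simp add: cut_split_def)
  from old_verts_cases[OF DiffD1[OF v]] old_verts_cases[OF DiffD1[OF w]] show "v = w"
  proof (elim disjE exE conjE)
    fix r r'
    assume "v = VG (length \<Delta>) r" "w = VG (length \<Delta>) r'"
    with eq v w cut_split_pos_inj[of r r'] show "v = w"
      by (auto simp: image)
  next
    fix r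
    assume "v = VG (length \<Delta>) r" "cut_split w = w" "\<forall>r. w \<noteq> VG (length \<Delta>) r \<and> w \<noteq> VG (Suc (length \<Delta>)) r"
    with eq cut_split_pos_cases[of r] show "v = w"
      by (auto simp: image)
  next
    fix r
    assume "w = VG (length \<Delta>) r" "cut_split v = v" "\<forall>r. v \<noteq> VG (length \<Delta>) r \<and> v \<noteq> VG (Suc (length \<Delta>)) r"
    with eq cut_split_pos_cases[of r] show "v = w"
      by (auto simp: image)
  next
    assume "cut_split v = v" "cut_split w = w"
    with eq show "v = w"
      by simp
  qed
qed

lemma cut_split_neq_cut_node:
  assumes v: "v \<in> preimage_verts - {cut_node, tensor_node}"
  shows "cut_split v \<noteq> VG (length \<Delta>) []"
proof
  assume eq: "cut_split v = VG (length \<Delta>) []"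
  from old_verts_cases[OF DiffD1[OF v]] show False
  proof
    assume "\<exists>r. v = VG (length \<Delta>) r"
    then obtain r where r: "v = VG (length \<Delta>) r"
      by blast
    with eq have "cut_split_pos r = cut_split_pos []"
      by (simp add: cut_split_def)
    with r v cut_split_pos_inj show False
      by blast
  next
    assume "cut_split v = v \<and> (\<forall>r. v \<noteq> VG (length \<Delta>) r \<and> v \<noteq> VG (Suc (length \<Delta>)) r)"
    with eq show False
      by auto
  qed
qed

lemma cut_split_connected_fibres: "connected_fibres cut_split preimage_verts (preimage_edges s)"
proof (rule connected_fibres_local[OF inj_on_cut_split])
  show "cut_split u \<noteq> cut_split v" if "u \<in> {cut_node, tensor_node}" "v \<in> preimage_verts - {cut_node, tensor_node}" for u v
    using that(1) cut_split_neq_cut_node[OF that(2)] by (auto simp: cut_split_def)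
  have "linked (collapsed cut_split (preimage_edges s)) cut_node tensor_node"
    by (intro linked_edge) (auto simp: collapsed_def cut_split_def)
  then show "linked (collapsed cut_split (preimage_edges s)) u v"
    if "u \<in> {cut_node, tensor_node}" "v \<in> {cut_node, tensor_node}" for u v
    using that by (auto intro: linked_sym)
qed

theorem correct_reduct: "correct P reduct_seq"
  unfolding correct_iff_ug_tree
proof (intro conjI allI)
  show "pre_proof_graph P reduct_seq"
    by (rule pre_proof_graph_reduct)
  fix s
  have "edges_within preimage_verts (old_edges (s \<circ> cut_split))"
    by (rule edges_within_mono[OF edges_within_old_edges]) blast
  moreover have "edges_within preimage_verts {{cut_node, root_A}, {cut_node, tensor_node}, {tensor_node, root_A'},
      {par_node, root_B}, {par_node, root_B'}}"
    using roots_in_old_verts by (intro edges_within_insert edges_within_empty) auto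
  ultimately have "edges_within preimage_verts (preimage_edges (s \<circ> cut_split))"
    by (rule edges_within_Un)
  from ug_tree_edge_image[OF ug_tree_preimage this cut_split_connected_fibres]
  show "ug_tree (graph_verts P reduct_seq) (switch_edges s P reduct_seq)"
    unfolding cut_split_verts cut_split_edges .
qed

end

theorem lemma1p15:
  assumes "correct P \<Gamma>"
      and "cut_red P \<Gamma> P' \<Gamma>'"
  shows "correct P' \<Gamma>'"
  using assms(2)
proof cases
  case (mult A B B' A' \<Delta>)
  have "correct P (\<Delta> @ [Node CutC (Node Par A B) (Node Tens B' A')])"
    using correct_mset_cong[OF assms(1)] mult by simp
  then have "correct P (\<Delta> @ [Node CutC A A', Node CutC B B'])"
    by (rule mult_redex.correct_reduct[OF mult_redex.intro])
  moreover have "mset \<Gamma>' = mset (\<Delta> @ [Node CutC A A', Node CutC B B'])"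
    using mult by (simp add: add_mset_commute)
  ultimately show ?thesis
    using mult correct_mset_cong by blast
next
  case (atom C h a i j k)
  have "correct P (\<Gamma>' @ [Node CutC (Leaf i (Pos a)) (Leaf j (Neg a))])"
    using correct_mset_cong[OF assms(1)] atom by simp
  then show ?thesis
    using atom_redex.correct_reduct[OF atom_redex.intro] atom by simp
next
  case (unit C Q i j)
  have "correct P (\<Gamma>' @ [Node CutC (Leaf i Bot) (Leaf j One)])"
    using correct_mset_cong[OF assms(1)] unit by simp
  then show ?thesis
    using unit_redex.correct_reduct[OF unit_redex.intro] unit by simp
qed

end
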